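(* Assume (A1) and let $S:\mathbb{R}^n\times\mathbb{R}\to\mathbb{R}\cup\{+\infty\}$ be $$S(x,t)=\begin{cases}\inf_{v\in\mathbb{R}^n}\{J(x-tv)+tH^*(v)\},& t>0,\\ (J^*+I_{\mathrm{dom}\,H})^*(x),& t=0,\\ +\infty,& t<0.\end{cases}$$ Then: (a) $S$ is jointly convex and lower semicontinuous, and for all $p\in\mathbb{R}^n$, $E^-\in\mathbb{R}$, $$S^*(p,E^-)=J^*(p)+I_{\{(p,E^-)\in(\mathrm{dom}\,H)\times\mathbb{R}:\,E^-+H(p)\le0\}}(p,E^-).$$ (b) $\mathrm{dom}\,S=\Big(\bigcup_{t>0}(\mathrm{dom}\,J+t\,\mathrm{dom}\,H^* )\times\{t\}\Big)\cup\Big((\mathrm{dom}\,J+\mathrm{dom}(I_{\mathrm{dom}\,H}^* ))\times\{0\}\Big)$ and $\mathrm{int}\,\mathrm{dom}\,S=\bigcup_{t>0}(\mathrm{dom}\,J+t\,\mathrm{int}\,\mathrm{dom}\,H^* )\times\{t\}$. (c) For every $(x,t)\in\mathrm{int}\,\mathrm{dom}\,S$, $S$ is differentiable at $(x,t)$ with $\nabla S(x,t)=(\bar p,-H(\bar p))$, where $\bar p$ is the unique maximizer of $p\mapsto\langle p,x\rangle-tH(p)-J^*(p)$ over $\mathbb{R}^n$. (d) $S$ satisfies $\frac{\partial S}{\partial t}(x,t)+H(\nabla_xS(x,t))=0$ for $(x,t)\in\mathrm{int}\,\mathrm{dom}\,S$ and $S(x,0)=J_S(x)$ for $x\in\mathbb{R}^n$,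 where $J_S\in\Gamma_0(\mathbb{R}^n)$ is any function with $\mathrm{dom}\,J_S^*=\mathrm{cl}\,\mathrm{dom}\,H$ and $J_S^*=J^*$ on $\mathrm{dom}\,J_S^*$. (e) $S(x,0)\le J(x)$ for all $x\in\mathbb{R}^n$. If $x\in\mathrm{dom}\,J$ satisfies $\partial J(x)\cap\mathrm{cl}\,\mathrm{dom}\,H\neq\emptyset$, then $S(x,0)=J(x)$ and $\partial_xS(x,0)=\partial J(x)\cap\mathrm{cl}\,\mathrm{dom}\,H$, where $\partial_xS(x,0)$ is the subdifferential of $y\mapsto S(y,0)$ at $x$.
   Context: $\Gamma_0(\mathbb{R}^n)$ denotes the set of proper, convex, lower semicontinuous functions $\mathbb{R}^n\to\mathbb{R}\cup\{+\infty\}$; $f^*$ is the Legendre–Fenchel transform (on $\mathbb{R}^n\times\mathbb{R}$ for $S$, with the standard inner product); $I_C$ is the indicator function of a set $C$ (0 on $C$, $+\infty$ off $C$); $\mathrm{cl}$ denotes closure; $\partial$ denotes the convex subdifferential. A function $g$ is 1-coercive if $g(x)/\|x\|\to+\infty$ as $\|x\|\to\infty$. A function $f\in\Gamma_0(\mathbb{R}^n)$ is Legendre if: $\mathrm{int}\,\mathrm{dom}\,f\neq\emptyset$; $f$ is differentiable on $\mathrm{int}\,\mathrm{dom}\,f$; $\partial f(x)=\emptyset$ for $x\in\mathrm{dom}\,f\setminus\mathrm{int}\,\mathrm{dom}\,f$ and $\partial f(x)=\{\nabla f(x)\}$ on $\mathrm{int}\,\mathrm{dom}\,f$; and $f$ is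 strictly convex on $\mathrm{int}\,\mathrm{dom}\,f$. Assumption (A1): $J,H\in\Gamma_0(\mathbb{R}^n)$, $J$ is 1-coercive, and $H$ is a Legendre function. *)

theory Defs
  imports "HOL-Analysis.Analysis"
begin

definition edom :: "('a \<Rightarrow> ereal) \<Rightarrow> 'a set" where
  "edom f = {x. f x < \<infinity>}"

definition eproper :: "('a \<Rightarrow> ereal) \<Rightarrow> bool" where
  "eproper f \<longleftrightarrow> (\<forall>x. f x \<noteq> -\<infinity>) \<and> (\<exists>x. f x < \<infinity>)"

definition econvex :: "('a::real_vector \<Rightarrow> ereal) \<Rightarrow> bool" where
  "econvex f \<longleftrightarrow> convex {(x, r::real). f x \<le> ereal r}"

definition elsc :: "('a::topological_space \<Rightarrow> ereal) \<Rightarrow> bool" where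
  "elsc f \<longleftrightarrow> (\<forall>x. f x \<le> Liminf (at x) f)"

definition Gamma0 :: "('a::real_normed_vector \<Rightarrow> ereal) \<Rightarrow> bool" where
  "Gamma0 f \<longleftrightarrow> eproper f \<and> econvex f \<and> elsc f"

definition fconj :: "('a::real_inner \<Rightarrow> ereal) \<Rightarrow> 'a \<Rightarrow> ereal" where
  "fconj f p = (SUP x. ereal (inner p x) - f x)"

definition ind :: "'a set \<Rightarrow> 'a \<Rightarrow> ereal" where
  "ind C x = (if x \<in> C then 0 else \<infinity>)"

text \<open>Convex subdifferential (empty outside the effective domain).\<close>
definition subdiff :: "('a::real_inner \<Rightarrow> ereal) \<Rightarrow> 'a \<Rightarrow> 'a set" where
  "subdiff f x = {p. \<bar>f x\<bar> \<noteq> \<infinity> \<and> (\<forall>y. f x + ereal (inner p (y - x)) \<le> f y)}"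

definition has_grad :: "('a::real_inner \<Rightarrow> ereal) \<Rightarrow> 'a \<Rightarrow> 'a \<Rightarrow> bool" where
  "has_grad f x g \<longleftrightarrow> (\<forall>\<^sub>F y in nhds x. \<bar>f y\<bar> \<noteq> \<infinity>) \<and>
     ((\<lambda>y. real_of_ereal (f y)) has_derivative (\<lambda>h. inner g h)) (at x)"

definition coercive1 :: "('a::real_normed_vector \<Rightarrow> ereal) \<Rightarrow> bool" where
  "coercive1 g \<longleftrightarrow> ((\<lambda>x. g x / ereal (norm x)) \<longlongrightarrow> \<infinity>) at_infinity"

definition legendre :: "('a::real_inner \<Rightarrow> ereal) \<Rightarrow> bool" where
  "legendre f \<longleftrightarrow> Gamma0 f \<and> interior (edom f) \<noteq> {} \<and>
     (\<forall>x\<in>interior (edom f). \<exists>g. has_grad f x g) \<and>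
     (\<forall>x\<in>edom f - interior (edom f). subdiff f x = {}) \<and>
     (\<forall>x\<in>interior (edom f). \<forall>g. has_grad f x g \<longrightarrow> subdiff f x = {g}) \<and>
     (\<forall>x\<in>interior (edom f). \<forall>y\<in>interior (edom f). x \<noteq> y \<longrightarrow>
        (\<forall>u::real. 0 < u \<and> u < 1 \<longrightarrow>
           f ((1 - u) *\<^sub>R x + u *\<^sub>R y) < ereal (1 - u) * f x + ereal u * f y))"

definition hlS :: "('a::real_inner \<Rightarrow> ereal) \<Rightarrow> ('a \<Rightarrow> ereal) \<Rightarrow> 'a \<times> real \<Rightarrow> ereal" where
  "hlS J H = (\<lambda>(x, t).
     if t > 0 then (INF v. J (x - t *\<^sub>R v) + ereal t * fconj H v)
     else if t = 0 then fconj (\<lambda>p. fconj J p + ind (edom H) p) x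
     else \<infinity>)"

end

theory Submission
  imports Defs
begin

text \<open>For \<open>t > 0\<close> the slice \<open>S(\<cdot>, t)\<close> is the infimal convolution of \<open>J\<close> with the perspective
  \<open>t H\<^sup>*(\<cdot>/t)\<close>; coercivity of \<open>J\<close> makes it a \<open>\<Gamma>\<^sub>0\<close> function with conjugate \<open>J\<^sup>* + t H\<close>, and at
  \<open>t = 0\<close> the support function of \<open>dom H\<close> replaces the perspective. Hence \<open>S\<close> is the
  biconjugate of \<open>J\<^sup>*(p) + I{E + H(p) \<le> 0}\<close>: it is convex and lower semicontinuous, and
  \<open>S(x, t) = sup\<^sub>p \<langle>p, x\<rangle> - t H(p) - J\<^sup>*(p)\<close>. Near an interior point this supremum is attained
  on a bounded set; at a maximizer \<open>H\<close> has a subgradient, so the maximizer lies in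
  \<open>int dom H\<close>, where strict convexity makes it unique. Maximizers depend continuously on
  \<open>(x, t)\<close>, and comparing the affine pieces they select gives \<open>\<nabla>S = (p, -H(p))\<close>.\<close>

section \<open>Conjugates and the Fenchel--Moreau theorem\<close>

lemma fconj_upper: "ereal (inner p x) - f x \<le> fconj f p"
  unfolding fconj_def by (rule SUP_upper) simp

lemma fconj_least: "(\<And>x. ereal (inner p x) - f x \<le> c) \<Longrightarrow> fconj f p \<le> c"
  unfolding fconj_def by (rule SUP_least)

lemma fconj_fconj_le: "fconj (fconj f) x \<le> f x"
proof (rule fconj_least)
  fix p
  have "ereal (inner p x) - f x \<le> fconj f p" by (rule fconj_upper)
  then show "ereal (inner x p) - fconj f p \<le> f x"
    by (cases "f x"; cases "fconj f p") (auto simp: inner_commute)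
qed

lemma fconj_antimono: "(\<And>x. f x \<le> g x) \<Longrightarrow> fconj g p \<le> fconj f p"
  unfolding fconj_def by (intro SUP_mono) (auto intro: ereal_minus_mono)

lemma elsc_eventually_less:
  assumes "elsc f" "c < f x"
  shows "\<forall>\<^sub>F y in nhds x. c < f y"
proof -
  have "c < Liminf (at x) f" using assms unfolding elsc_def by (meson less_le_trans)
  then have "\<forall>\<^sub>F y in at x. c < f y" by (rule less_LiminfD)
  then show ?thesis using assms(2) by (auto simp: eventually_at_filter elim: eventually_mono)
qed

lemma elscI:
  assumes "\<And>x c. c < f x \<Longrightarrow> \<forall>\<^sub>F y in nhds x. c < f y"
  shows "elsc f"
  unfolding elsc_def le_Liminf_iff
proof (intro allI impI)
  fix x y assume "y < f x"
  from assms[OF this] show "\<forall>\<^sub>F z in at x. y < f z"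
    by (auto simp: eventually_at_filter elim: eventually_mono)
qed

lemma elsc_tendsto:
  assumes "elsc f" "(X \<longlongrightarrow> x) F" "c < f x"
  shows "\<forall>\<^sub>F n in F. c < f (X n)"
  using eventually_compose_filterlim[OF elsc_eventually_less[OF assms(1,3)] assms(2)] .

lemma econvex_iff:
  "econvex f \<longleftrightarrow> (\<forall>x y u r s. 0 \<le> u \<longrightarrow> u \<le> 1 \<longrightarrow> f x \<le> ereal r \<longrightarrow> f y \<le> ereal s \<longrightarrow>
      f ((1-u) *\<^sub>R x + u *\<^sub>R y) \<le> ereal ((1-u) * r + u * s))"
  unfolding econvex_def convex_alt
  by (simp add: algebra_simps) (intro iffI allI impI; metis mult.commute)

lemma econvexD:
  assumes "econvex f" "0 \<le> u" "u \<le> 1" "f x \<le> ereal r" "f y \<le> ereal s"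
  shows "f ((1-u) *\<^sub>R x + u *\<^sub>R y) \<le> ereal ((1-u) * r + u * s)"
  using assms unfolding econvex_iff by blast

lemma fconj_econvex: "econvex (fconj f)"
  unfolding econvex_iff
proof (intro allI impI)
  fix p q r s and u :: real
  assume u: "0 \<le> u" "u \<le> 1" and pr: "fconj f p \<le> ereal r" and qs: "fconj f q \<le> ereal s"
  show "fconj f ((1 - u) *\<^sub>R p + u *\<^sub>R q) \<le> ereal ((1 - u) * r + u * s)"
  proof (rule fconj_least)
    fix x
    have a: "ereal (inner p x) - f x \<le> ereal r" using fconj_upper[of p x f] pr by order
    have b: "ereal (inner q x) - f x \<le> ereal s" using fconj_upper[of q x f] qs by order
    show "ereal (inner ((1 - u) *\<^sub>R p + u *\<^sub>R q) x) - f x \<le> ereal ((1 - u) * r + u * s)"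
    proof (cases "f x")
      case (real v)
      have "inner p x - v \<le> r" "inner q x - v \<le> s" using a b real by auto
      then have "(1-u) * (inner p x - v) + u * (inner q x - v) \<le> (1-u) * r + u * s"
        using u by (intro add_mono mult_left_mono) auto
      then show ?thesis using real by (simp add: inner_add_left algebra_simps)
    qed (use a in auto)
  qed
qed

lemma fconj_elsc: "elsc (fconj f)"
proof (rule elscI)
  fix p c assume "c < fconj f p"
  then obtain x where x: "c < ereal (inner p x) - f x" unfolding fconj_def by (auto simp: less_SUP_iff)
  show "\<forall>\<^sub>F q in nhds p. c < fconj f q"
  proof (cases "f x")
    case (real v)
    have "((\<lambda>q. ereal (inner q x - v)) \<longlongrightarrow> ereal (inner p x - v)) (nhds p)"
      by (intro tendsto_ereal tendsto_diff tendsto_inner tendsto_const filterlim_ident)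
    moreover have "c < ereal (inner p x - v)" using x real by simp
    ultimately have "\<forall>\<^sub>F q in nhds p. c < ereal (inner q x - v)" by (rule order_tendstoD)
    then show ?thesis
    proof (rule eventually_mono)
      fix q assume "c < ereal (inner q x - v)"
      also have "\<dots> = ereal (inner q x) - f x" using real by simp
      also have "\<dots> \<le> fconj f q" by (rule fconj_upper)
      finally show "c < fconj f q" .
    qed
  next
    case PInf then show ?thesis using x by simp
  next
    case MInf
    have "fconj f q = \<infinity>" for q using fconj_upper[of q x f] MInf by simp
    moreover have "c < \<infinity>" using x by (meson less_le_trans ereal_less_eq(1))
    ultimately show ?thesis by simp
  qed
qed

lemma elsc_closed_epigraph:
  fixes f :: "'a::real_normed_vector \<Rightarrow> ereal"
  assumes "elsc f"
  shows "closed {(y, r::real). f y \<le> ereal r}"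
  unfolding closed_sequential_limits
proof (intro allI impI, elim conjE)
  fix z :: "nat \<Rightarrow> 'a \<times> real" and l
  assume z: "\<forall>n. z n \<in> {(y, r). f y \<le> ereal r}" and lim: "z \<longlonglongrightarrow> l"
  obtain y r where l: "l = (y, r)" by fastforce
  show "l \<in> {(y, r). f y \<le> ereal r}"
  proof (rule ccontr)
    assume "l \<notin> {(y, r). f y \<le> ereal r}"
    then have "ereal r < f y" using l by auto
    then obtain c where c: "ereal r < c" "c < f y" using dense by blast
    have "(fst \<circ> z) \<longlonglongrightarrow> y" using tendsto_fst[OF lim] l by (simp add: o_def)
    from elsc_tendsto[OF assms this c(2)] have "\<forall>\<^sub>F n in sequentially. c < f (fst (z n))" by simp
    moreover have "(\<lambda>n. ereal (snd (z n))) \<longlonglongrightarrow> ereal r" using tendsto_snd[OF lim] l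
      by (intro tendsto_ereal) simp
    then have "\<forall>\<^sub>F n in sequentially. ereal (snd (z n)) < c" using c(1) by (rule order_tendstoD)
    ultimately have "\<forall>\<^sub>F n in sequentially. False"
    proof eventually_elim
      case (elim n)
      have "f (fst (z n)) \<le> ereal (snd (z n))" using z by (auto simp: case_prod_unfold)
      then show False using elim by order
    qed
    then show False by simp
  qed
qed

lemma Gamma0_not_minf: "Gamma0 f \<Longrightarrow> f x \<noteq> -\<infinity>"
  unfolding Gamma0_def eproper_def by auto

lemma Gamma0_ex_finite: "Gamma0 f \<Longrightarrow> \<exists>x. f x < \<infinity>"
  unfolding Gamma0_def eproper_def by auto

lemma Gamma0_epigraph_separation:
  fixes f :: "'a::euclidean_space \<Rightarrow> ereal"
  assumes G: "Gamma0 f" and beta: "ereal \<beta> < f x"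
  obtains a \<alpha> b where "\<alpha> \<ge> 0" "inner a x + \<alpha> * \<beta> < b"
    "\<And>y r. f y \<le> ereal r \<Longrightarrow> inner a y + \<alpha> * r > b"
proof -
  let ?E = "{(y, r::real). f y \<le> ereal r}"
  have "convex ?E" "closed ?E" using G elsc_closed_epigraph unfolding Gamma0_def econvex_def by auto
  moreover have "(x, \<beta>) \<notin> ?E" using beta by auto
  ultimately obtain w b where w: "inner w (x, \<beta>) < b" "\<forall>z\<in>?E. inner w z > b"
    using separating_hyperplane_closed_point by blast
  obtain a \<alpha> where wa: "w = (a, \<alpha>)" by fastforce
  have E: "inner a y + \<alpha> * r > b" if "f y \<le> ereal r" for y r
    using w(2) that wa by (auto simp: inner_Pair)
  obtain y0 R where R: "f y0 \<le> ereal R"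
  proof -
    obtain y0 where "f y0 < \<infinity>" using Gamma0_ex_finite[OF G] by blast
    then show ?thesis using that[of y0 "real_of_ereal (f y0)"] by (cases "f y0") auto
  qed
  have "\<alpha> \<ge> 0"
  proof (rule ccontr)
    assume "\<not> \<alpha> \<ge> 0"
    then have an: "\<alpha> < 0" by simp
    define r where "r = max R ((b - inner a y0) / \<alpha>)"
    have "f y0 \<le> ereal r" using R unfolding r_def by (meson ereal_less_eq(3) max.cobounded1 order_trans)
    then have "inner a y0 + \<alpha> * r > b" by (rule E)
    moreover have "\<alpha> * r \<le> \<alpha> * ((b - inner a y0) / \<alpha>)"
      using an unfolding r_def by (intro mult_left_mono_neg) auto
    then have "\<alpha> * r \<le> b - inner a y0" using an by simp
    ultimately show False by linarith
  qed
  then show ?thesis using that[of \<alpha> a b] w(1) E wa by (auto simp: inner_Pair)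
qed

lemma Gamma0_affine_minorant:
  fixes f :: "'a::euclidean_space \<Rightarrow> ereal"
  assumes G: "Gamma0 f"
  obtains p c where "\<And>y. ereal (inner p y + c) \<le> f y"
proof -
  obtain x0 v where v: "f x0 = ereal v"
  proof -
    obtain x0 where "f x0 < \<infinity>" using Gamma0_ex_finite[OF G] by blast
    then show ?thesis using that[of x0] Gamma0_not_minf[OF G, of x0] by (cases "f x0") auto
  qed
  then have "ereal (v - 1) < f x0" by simp
  then obtain a \<alpha> b where ab: "\<alpha> \<ge> 0" "inner a x0 + \<alpha> * (v - 1) < b"
    "\<And>y r. f y \<le> ereal r \<Longrightarrow> inner a y + \<alpha> * r > b" by (rule Gamma0_epigraph_separation[OF G]) blast
  have "inner a x0 + \<alpha> * v > b" using ab(3)[of x0 v] v by simp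
  with ab(1,2) have ap: "\<alpha> > 0" by (cases "\<alpha> = 0") auto
  show ?thesis
  proof (rule that[of "-(1/\<alpha>) *\<^sub>R a" "b/\<alpha>"])
    fix y
    show "ereal (inner (- (1 / \<alpha>) *\<^sub>R a) y + b / \<alpha>) \<le> f y"
    proof (cases "f y")
      case (real w)
      have "inner a y + \<alpha> * w > b" using ab(3)[of y w] real by simp
      then have "(b - inner a y) / \<alpha> < w" using ap by (simp add: pos_divide_less_eq algebra_simps)
      moreover have "inner (- (1 / \<alpha>) *\<^sub>R a) y + b / \<alpha> = (b - inner a y) / \<alpha>"
        by (simp add: diff_divide_distrib)
      ultimately show ?thesis using real by simp
    next
      case MInf then show ?thesis using Gamma0_not_minf[OF G] by auto
    qed simp
  qed
qed

text \<open>A non-vertical separating hyperplane is already an affine minorant exceeding \<open>\<beta>\<close> at \<open>x\<close>;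
  a vertical one is tilted by adding a large multiple of it to some affine minorant.\<close>

lemma Gamma0_affine_minorant_above:
  fixes f :: "'a::euclidean_space \<Rightarrow> ereal"
  assumes G: "Gamma0 f" and beta: "ereal \<beta> < f x"
  obtains p c where "\<And>y. ereal (inner p y + c) \<le> f y" "\<beta> < inner p x + c"
proof -
  obtain a \<alpha> b where ab: "\<alpha> \<ge> 0" "inner a x + \<alpha> * \<beta> < b"
    and epi: "\<And>y r. f y \<le> ereal r \<Longrightarrow> inner a y + \<alpha> * r > b"
    by (rule Gamma0_epigraph_separation[OF G beta]) blast
  have minorant: "ereal (inner p y + c) \<le> f y"
    if "\<And>r. f y \<le> ereal r \<Longrightarrow> inner p y + c \<le> r" for p c y
    using that Gamma0_not_minf[OF G, of y] by (cases "f y") auto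
  show ?thesis
  proof (cases "\<alpha> > 0")
    case True
    show ?thesis
    proof (rule that[of "-(1/\<alpha>) *\<^sub>R a" "b/\<alpha>"])
      fix y
      show "ereal (inner (-(1/\<alpha>) *\<^sub>R a) y + b/\<alpha>) \<le> f y"
      proof (rule minorant)
        fix r assume "f y \<le> ereal r"
        with epi have "b - inner a y < \<alpha> * r" by fastforce
        then show "inner (-(1/\<alpha>) *\<^sub>R a) y + b/\<alpha> \<le> r"
          using True by (simp add: field_simps)
      qed
      show "\<beta> < inner (-(1/\<alpha>) *\<^sub>R a) x + b/\<alpha>" using ab(2) True by (simp add: field_simps)
    qed
  next
    case False
    then have a0: "\<alpha> = 0" using ab(1) by simp
    obtain p0 c0 where pc: "\<And>y. ereal (inner p0 y + c0) \<le> f y" by (rule Gamma0_affine_minorant[OF G]) blast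
    define d where "d = b - inner a x"
    have dp: "d > 0" using ab(2) a0 unfolding d_def by simp
    define lam where "lam = (\<bar>\<beta> - inner p0 x - c0\<bar> + 1) / d"
    have lp: "lam \<ge> 0" and ld: "lam * d = \<bar>\<beta> - inner p0 x - c0\<bar> + 1"
      unfolding lam_def using dp by simp_all
    show ?thesis
    proof (rule that[of "p0 - lam *\<^sub>R a" "c0 + lam * b"])
      fix y
      show "ereal (inner (p0 - lam *\<^sub>R a) y + (c0 + lam * b)) \<le> f y"
      proof (rule minorant)
        fix r assume r: "f y \<le> ereal r"
        then have "lam * b \<le> lam * inner a y" using epi[OF r] a0 lp by (simp add: mult_left_mono)
        moreover have "inner p0 y + c0 \<le> r" using order_trans[OF pc[of y] r] by simp
        ultimately show "inner (p0 - lam *\<^sub>R a) y + (c0 + lam * b) \<le> r" by (simp add: inner_diff_left)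
      qed
      have "inner (p0 - lam *\<^sub>R a) x + (c0 + lam * b) = inner p0 x + c0 + lam * d"
        unfolding d_def by (simp add: inner_diff_left algebra_simps)
      then show "\<beta> < inner (p0 - lam *\<^sub>R a) x + (c0 + lam * b)" using ld by linarith
    qed
  qed
qed

lemma affine_minorant_le_fconj_fconj:
  assumes "\<And>y. ereal (inner p y + c) \<le> f y"
  shows "ereal (inner p x + c) \<le> fconj (fconj f) x"
proof -
  have "fconj f p \<le> ereal (- c)"
  proof (rule fconj_least)
    fix y show "ereal (inner p y) - f y \<le> ereal (- c)" using assms[of y] by (cases "f y") auto
  qed
  then have "ereal (inner x p) - ereal (- c) \<le> ereal (inner x p) - fconj f p"
    by (rule ereal_minus_mono[OF order_refl])
  also have "\<dots> \<le> fconj (fconj f) x" by (rule fconj_upper)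
  finally show ?thesis by (simp add: inner_commute)
qed

lemma fconj_not_minf:
  assumes "\<exists>x. f x < \<infinity>" shows "fconj f p \<noteq> -\<infinity>"
proof -
  obtain x where "f x < \<infinity>" using assms by auto
  then have "ereal (inner p x) - f x \<noteq> -\<infinity>" by (cases "f x") auto
  then show ?thesis using fconj_upper[of p x f] by auto
qed

lemma fconj_eproper:
  fixes f :: "'a::euclidean_space \<Rightarrow> ereal"
  assumes G: "Gamma0 f" shows "eproper (fconj f)"
proof -
  obtain p c where pc: "\<And>y. ereal (inner p y + c) \<le> f y" by (rule Gamma0_affine_minorant[OF G]) blast
  have "fconj f p \<le> ereal (-c)"
  proof (rule fconj_least)
    fix y show "ereal (inner p y) - f y \<le> ereal (- c)" using pc[of y] by (cases "f y") auto
  qed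
  then have "fconj f p < \<infinity>" by (cases "fconj f p") auto
  then show ?thesis unfolding eproper_def using fconj_not_minf Gamma0_ex_finite[OF G] by auto
qed

lemma fconj_Gamma0:
  fixes f :: "'a::euclidean_space \<Rightarrow> ereal"
  assumes G: "Gamma0 f" shows "Gamma0 (fconj f)"
  unfolding Gamma0_def using fconj_eproper[OF G] fconj_econvex fconj_elsc by auto

theorem fenchel_moreau:
  fixes f :: "'a::euclidean_space \<Rightarrow> ereal"
  assumes G: "Gamma0 f"
  shows "fconj (fconj f) x = f x"
proof (rule antisym[OF fconj_fconj_le], rule ccontr)
  assume "\<not> f x \<le> fconj (fconj f) x"
  then have "fconj (fconj f) x < f x" by simp
  then obtain \<beta> where b1: "fconj (fconj f) x < ereal \<beta>" and b2: "ereal \<beta> < f x"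
    using ereal_dense2 by blast
  obtain p c where minorant: "\<And>y. ereal (inner p y + c) \<le> f y" and pc: "\<beta> < inner p x + c"
    by (rule Gamma0_affine_minorant_above[OF G b2]) blast
  have "ereal (inner p x + c) \<le> fconj (fconj f) x" by (rule affine_minorant_le_fconj_fconj[OF minorant])
  also note b1
  finally show False using pc by simp
qed

section \<open>Lower semicontinuity, coercivity and local finiteness\<close>

lemma elscI_finite:
  assumes "\<And>x c. ereal c < f x \<Longrightarrow> \<forall>\<^sub>F y in nhds x. ereal c < f y" "\<And>x. f x \<noteq> -\<infinity>"
  shows "elsc f"
proof (rule elscI)
  fix x c assume c: "c < f x"
  show "\<forall>\<^sub>F y in nhds x. c < f y"
  proof (cases c)
    case (real r) then show ?thesis using assms(1) c by simp
  next
    case PInf then show ?thesis using c by simp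
  next
    case MInf then show ?thesis using assms(2) by (simp add: order.not_eq_order_implies_strict)
  qed
qed

lemma elsc_closed_sublevel:
  fixes f :: "'a::real_normed_vector \<Rightarrow> ereal"
  assumes "elsc f"
  shows "closed {y. f y \<le> c}"
  unfolding closed_sequential_limits
proof (intro allI impI, elim conjE)
  fix z :: "nat \<Rightarrow> 'a" and l
  assume z: "\<forall>n. z n \<in> {y. f y \<le> c}" and lim: "z \<longlonglongrightarrow> l"
  show "l \<in> {y. f y \<le> c}"
  proof (rule ccontr)
    assume "l \<notin> {y. f y \<le> c}"
    then have "c < f l" by auto
    from elsc_tendsto[OF assms lim this] have "\<forall>\<^sub>F n in sequentially. c < f (z n)" .
    then have "\<forall>\<^sub>F n in sequentially. False"
    proof (rule eventually_mono)
      fix n assume "c < f (z n)"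
      moreover have "f (z n) \<le> c" using z by auto
      ultimately show False by simp
    qed
    then show False by simp
  qed
qed

lemma elsc_attains_min:
  fixes f :: "'a::real_normed_vector \<Rightarrow> ereal"
  assumes "elsc f" "compact K" "K \<noteq> {}"
  obtains x where "x \<in> K" "\<And>y. y \<in> K \<Longrightarrow> f x \<le> f y"
proof -
  define m where "m = (INF y\<in>K. f y)"
  let ?F = "(\<lambda>c. {y. f y \<le> c}) ` {c. m < c}"
  have "K \<inter> \<Inter>?F \<noteq> {}"
  proof (rule compact_imp_fip[OF assms(2)])
    fix T assume "T \<in> ?F" then show "closed T" using elsc_closed_sublevel[OF assms(1)] by auto
  next
    fix F' assume F': "finite F'" "F' \<subseteq> ?F"
    then obtain C where C: "C \<subseteq> {c. m < c}" "finite C" "F' = (\<lambda>c. {y. f y \<le> c}) ` C"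
      using finite_subset_image by metis
    show "K \<inter> \<Inter>F' \<noteq> {}"
    proof (cases "C = {}")
      case True then show ?thesis using C assms(3) by auto
    next
      case False
      have "m < Min C" using C False by auto
      then obtain y where y: "y \<in> K" "f y < Min C" unfolding m_def by (auto simp: INF_less_iff)
      have "y \<in> K \<inter> \<Inter>F'" using y C False by (auto intro: order.strict_implies_order)
      then show ?thesis by auto
    qed
  qed
  then obtain x where x: "x \<in> K" "\<And>c. m < c \<Longrightarrow> f x \<le> c" by auto
  have "f x \<le> m" by (rule dense_ge) (use x in auto)
  then show ?thesis using that[OF x(1)] unfolding m_def by (meson INF_lower order_trans)
qed

lemma elsc_le_limit:
  assumes "elsc f" "X \<longlonglongrightarrow> l" "\<And>n. f (X n) = ereal (g n)" "g \<longlonglongrightarrow> h"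
  shows "f l \<le> ereal h"
proof (rule ccontr)
  assume "\<not> f l \<le> ereal h"
  then have "ereal h < f l" by simp
  then obtain c where c: "ereal h < c" "c < f l" using dense by blast
  have "\<forall>\<^sub>F n in sequentially. c < f (X n)" by (rule elsc_tendsto[OF assms(1,2) c(2)])
  moreover have "(\<lambda>n. ereal (g n)) \<longlonglongrightarrow> ereal h" by (rule tendsto_ereal[OF assms(4)])
  then have "\<forall>\<^sub>F n in sequentially. ereal (g n) < c" using c(1) by (rule order_tendstoD)
  ultimately have "\<forall>\<^sub>F n in sequentially. False"
  proof eventually_elim
    case (elim n) then show False using assms(3)[of n] by simp
  qed
  then show False by simp
qed

lemma ereal_less_add_split:
  assumes "ereal c < A + B" "A \<noteq> -\<infinity>" "B \<noteq> -\<infinity>"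
  obtains a b where "ereal a < A" "ereal b < B" "c = a + b"
proof (cases A)
  case (real x)
  show ?thesis
  proof (cases B)
    case (real y)
    have "c < x + y" using assms(1) \<open>A = ereal x\<close> real by simp
    then show ?thesis using that[of "x - (x + y - c)/2" "y - (x + y - c)/2"] \<open>A = ereal x\<close> real by simp
  next
    case PInf then show ?thesis using that[of "x - 1" "c - (x - 1)"] \<open>A = ereal x\<close> by simp
  qed (use assms in auto)
next
  case PInf
  show ?thesis
  proof (cases B)
    case (real y) then show ?thesis using that[of "c - (y - 1)" "y - 1"] PInf by simp
  next
    case PInf then show ?thesis using that[of c 0] \<open>A = \<infinity>\<close> by simp
  qed (use assms in auto)
qed (use assms in auto)

lemma ereal_add_strict_mono_real: "ereal a < A \<Longrightarrow> ereal b < B \<Longrightarrow> ereal (a + b) < A + B"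
  by (cases A; cases B) auto

lemma elsc_add:
  fixes f g :: "'a::real_normed_vector \<Rightarrow> ereal"
  assumes "elsc f" "elsc g" "\<And>x. f x \<noteq> -\<infinity>" "\<And>x. g x \<noteq> -\<infinity>"
  shows "elsc (\<lambda>x. f x + g x)"
proof (rule elscI_finite)
  fix x c assume c: "ereal c < f x + g x"
  obtain a b where ab: "ereal a < f x" "ereal b < g x" "c = a + b"
    using ereal_less_add_split[OF c assms(3,4)] by blast
  have "\<forall>\<^sub>F y in nhds x. ereal a < f y" by (rule elsc_eventually_less[OF assms(1) ab(1)])
  moreover have "\<forall>\<^sub>F y in nhds x. ereal b < g y" by (rule elsc_eventually_less[OF assms(2) ab(2)])
  ultimately show "\<forall>\<^sub>F y in nhds x. ereal c < f y + g y"
    by eventually_elim (use ab(3) in \<open>auto intro: ereal_add_strict_mono_real\<close>)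
next
  fix x show "f x + g x \<noteq> -\<infinity>" using assms(3,4)[of x] by simp
qed

lemma ereal_less_mult_pos_iff:
  assumes "t > 0"
  shows "c < ereal t * a \<longleftrightarrow> c * ereal (1/t) < a"
  using assms by (cases c; cases a) (auto simp: field_simps)

lemma ereal_mult_pos_le_iff:
  assumes "t > 0"
  shows "ereal t * a \<le> ereal r \<longleftrightarrow> a \<le> ereal (r / t)"
  using assms by (cases a) (auto simp: field_simps)

lemma elsc_scale_pos:
  fixes f :: "'a::real_normed_vector \<Rightarrow> ereal"
  assumes lf: "elsc f" and t: "t > 0"
  shows "elsc (\<lambda>q. ereal t * f q)"
proof (rule elscI)
  fix x c assume "c < ereal t * f x"
  then have "c * ereal (1/t) < f x" using ereal_less_mult_pos_iff[OF t] by blast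
  from elsc_eventually_less[OF lf this] show "\<forall>\<^sub>F y in nhds x. c < ereal t * f y"
    using ereal_less_mult_pos_iff[OF t] by simp
qed

lemma elsc_continuous:
  fixes \<phi> :: "'a::real_normed_vector \<Rightarrow> real"
  assumes c: "continuous_on UNIV \<phi>"
  shows "elsc (\<lambda>q. ereal (\<phi> q))"
proof (rule elscI)
  fix x c assume cx: "c < ereal (\<phi> x)"
  have "(\<phi> \<longlongrightarrow> \<phi> x) (at x)" using c unfolding continuous_on_def by simp
  then have "((\<lambda>q. ereal (\<phi> q)) \<longlongrightarrow> ereal (\<phi> x)) (at x)" by (rule tendsto_ereal)
  from order_tendstoD(1)[OF this cx] have "\<forall>\<^sub>F y in at x. c < ereal (\<phi> y)" .
  then show "\<forall>\<^sub>F y in nhds x. c < ereal (\<phi> y)" using cx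
    by (auto simp: eventually_at_filter elim: eventually_mono)
qed

lemma coercive1_lower_bound:
  fixes J :: "'a::real_normed_vector \<Rightarrow> ereal"
  assumes "coercive1 J"
  obtains R where "R > 0" "\<And>x. norm x \<ge> R \<Longrightarrow> J x \<ge> ereal (M * norm x)"
proof -
  have "\<forall>\<^sub>F x::'a in at_infinity. ereal M < J x / ereal (norm x)"
    using assms unfolding coercive1_def by (rule order_tendstoD) simp
  then obtain b where b: "\<And>x. b \<le> norm x \<Longrightarrow> ereal M < J x / ereal (norm x)"
    unfolding eventually_at_infinity by blast
  show ?thesis
  proof (rule that[of "max b 1"])
    fix x :: 'a assume "max b 1 \<le> norm x"
    then have nx: "norm x \<ge> 1" "b \<le> norm x" by auto
    have m: "ereal M < J x / ereal (norm x)" using b nx by blast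
    show "J x \<ge> ereal (M * norm x)"
    proof (cases "J x")
      case (real v)
      moreover have "x \<noteq> 0" using nx by auto
      ultimately have "M < v / norm x" using m by simp
      moreover have npos: "0 < norm x" using nx by linarith
      ultimately have "M * norm x < v" using pos_less_divide_eq[OF npos] by blast
      then show ?thesis using real by simp
    next
      case MInf then show ?thesis using m nx by simp
    qed simp
  qed simp
qed

lemma Gamma0_bounded_below_cball:
  fixes J :: "'a::euclidean_space \<Rightarrow> ereal"
  assumes "Gamma0 J"
  obtains m where "\<And>x. norm x \<le> R \<Longrightarrow> J x \<ge> ereal m"
proof (cases "R \<ge> 0")
  case True
  have "compact (cball (0::'a) R)" "cball (0::'a) R \<noteq> {}" using True by auto
  then obtain x0 where x0: "x0 \<in> cball 0 R" "\<And>y. y \<in> cball 0 R \<Longrightarrow> J x0 \<le> J y"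
    using elsc_attains_min[of J] assms unfolding Gamma0_def by blast
  show ?thesis
  proof (cases "J x0")
    case (real m) then show ?thesis using that[of m] x0 by auto
  next
    case PInf then show ?thesis using that[of 0] x0 by force
  next
    case MInf then show ?thesis using Gamma0_not_minf[OF assms] by auto
  qed
next
  case False then show ?thesis using that[of 0] by (smt (verit) norm_ge_zero)
qed

lemma coercive1_fconj_finite:
  fixes J :: "'a::euclidean_space \<Rightarrow> ereal"
  assumes G: "Gamma0 J" and C: "coercive1 J"
  shows "\<bar>fconj J p\<bar> \<noteq> \<infinity>"
proof -
  obtain R where R: "R > 0" "\<And>x. norm x \<ge> R \<Longrightarrow> J x \<ge> ereal ((norm p + 1) * norm x)"
    using coercive1_lower_bound[OF C] by blast
  obtain m where m: "\<And>x. norm x \<le> R \<Longrightarrow> J x \<ge> ereal m" using Gamma0_bounded_below_cball[OF G] by blast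
  have "fconj J p \<le> ereal (max 0 (norm p * R - m))"
  proof (rule fconj_least)
    fix x
    show "ereal (inner p x) - J x \<le> ereal (max 0 (norm p * R - m))"
    proof (cases "norm x \<ge> R")
      case True
      have j: "J x \<ge> ereal ((norm p + 1) * norm x)" using R(2)[OF True] .
      have "inner p x \<le> norm p * norm x" by (simp add: norm_cauchy_schwarz)
      moreover have "norm p * norm x \<le> (norm p + 1) * norm x" by (simp add: mult_right_mono)
      ultimately have "inner p x - (norm p + 1) * norm x \<le> 0" by linarith
      then have "ereal (inner p x) - J x \<le> 0" using j by (cases "J x") auto
      then show ?thesis by (rule order_trans) (simp add: le_max_iff_disj)
    next
      case False
      have j: "J x \<ge> ereal m" using m False by simp
      have "inner p x \<le> norm p * norm x" by (simp add: norm_cauchy_schwarz)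
      also have "\<dots> \<le> norm p * R" using False by (simp add: mult_left_mono)
      finally have fin: "inner p x - m \<le> max 0 (norm p * R - m)" by simp
      have "ereal (inner p x) - J x \<le> ereal (inner p x - m)" using j by (cases "J x") auto
      then show ?thesis using fin by (meson ereal_less_eq(3) order_trans)
    qed
  qed
  then have "fconj J p \<noteq> \<infinity>" by (metis ereal_infty_less_eq(1) ereal_less_eq(1) PInfty_neq_ereal(1) antisym)
  moreover have "fconj J p \<noteq> -\<infinity>" using fconj_not_minf Gamma0_ex_finite[OF G] by blast
  ultimately show ?thesis by auto
qed

lemma convex_edom:
  assumes "econvex f" "\<And>x. f x \<noteq> -\<infinity>"
  shows "convex (edom f)"
  unfolding convex_alt
proof (intro ballI allI impI)
  fix x y and u :: real
  assume "x \<in> edom f" "y \<in> edom f" and u: "0 \<le> u \<and> u \<le> 1"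
  then have x: "f x < \<infinity>" and y: "f y < \<infinity>" unfolding edom_def by auto
  obtain a b where "f x = ereal a" "f y = ereal b" using x y assms(2)[of x] assms(2)[of y]
    by (cases "f x"; cases "f y") auto
  then have "f ((1 - u) *\<^sub>R x + u *\<^sub>R y) \<le> ereal ((1 - u) * a + u * b)"
    using u by (intro econvexD[OF assms(1)]) auto
  then show "(1 - u) *\<^sub>R x + u *\<^sub>R y \<in> edom f" unfolding edom_def
    by (cases "f ((1 - u) *\<^sub>R x + u *\<^sub>R y)") auto
qed

definition rfun :: "('a \<Rightarrow> ereal) \<Rightarrow> 'a \<Rightarrow> real" where
  "rfun f x = real_of_ereal (f x)"

lemma econvex_finite_convex_on:
  assumes f: "econvex f" and S: "convex S" and fin: "\<And>x. x \<in> S \<Longrightarrow> \<bar>f x\<bar> \<noteq> \<infinity>"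
  shows "convex_on S (rfun f)"
proof (rule convex_onI[OF _ S])
  fix t :: real and x y assume t: "0 < t" "t < 1" and xy: "x \<in> S" "y \<in> S"
  have eq: "f z = ereal (rfun f z)" if "z \<in> S" for z
    using fin[OF that] unfolding rfun_def by (metis ereal_real')
  have "(1 - t) *\<^sub>R x + t *\<^sub>R y \<in> S" using S xy t unfolding convex_alt by auto
  moreover have "f ((1 - t) *\<^sub>R x + t *\<^sub>R y) \<le> ereal ((1 - t) * rfun f x + t * rfun f y)"
    using t eq[OF xy(1)] eq[OF xy(2)] by (intro econvexD[OF f]) auto
  ultimately show "rfun f ((1 - t) *\<^sub>R x + t *\<^sub>R y) \<le> (1 - t) * rfun f x + t * rfun f y"
    using eq by fastforce
qed

lemma econvex_finite_continuous:
  fixes f :: "'a::euclidean_space \<Rightarrow> ereal"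
  assumes "econvex f" "\<And>x. \<bar>f x\<bar> \<noteq> \<infinity>"
  shows "continuous_on UNIV (rfun f)"
  using convex_on_continuous[OF open_UNIV econvex_finite_convex_on[OF assms(1) convex_UNIV assms(2)]] .

lemma econvex_local_bound:
  fixes f :: "'b::euclidean_space \<Rightarrow> ereal"
  assumes cf: "econvex f" and nm: "\<And>y. f y \<noteq> -\<infinity>" and z: "z \<in> interior (edom f)"
  obtains \<delta> M where "\<delta> > 0" "\<And>y. y \<in> cball z \<delta> \<Longrightarrow> f y \<le> ereal M"
    "\<And>y. y \<in> cball z \<delta> \<Longrightarrow> \<bar>f y\<bar> \<noteq> \<infinity>" "isCont (rfun f) z"
proof -
  obtain e where e: "e > 0" "ball z e \<subseteq> edom f"
    using z open_interior[of "edom f"] interior_subset unfolding open_contains_ball by blast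
  have fin: "\<bar>f y\<bar> \<noteq> \<infinity>" if "y \<in> ball z e" for y
    using e(2) that nm[of y] unfolding edom_def by auto
  have cont: "continuous_on (ball z e) (rfun f)"
    by (rule convex_on_continuous[OF open_ball econvex_finite_convex_on[OF cf convex_ball fin]])
  then have ic: "isCont (rfun f) z" using e(1) continuous_on_eq_continuous_at[OF open_ball, of z e "rfun f"] by simp
  have sub: "cball z (e/2) \<subseteq> ball z e" using e(1) by (simp add: subset_eq)
  have "compact (rfun f ` cball z (e/2))"
    by (rule compact_continuous_image[OF continuous_on_subset[OF cont sub] compact_cball])
  then obtain M where M: "\<forall>r\<in>rfun f ` cball z (e/2). \<bar>r\<bar> \<le> M"
    using compact_imp_bounded bounded_real by blast
  show ?thesis
  proof (rule that[of "e/2" M])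
    show "e/2 > 0" using e by simp
    fix y assume y: "y \<in> cball z (e/2)"
    then have yb: "y \<in> ball z e" using sub by blast
    show "f y \<le> ereal M" using M y fin[OF yb] unfolding rfun_def by (force simp: ereal_real')
    show "\<bar>f y\<bar> \<noteq> \<infinity>" using fin[OF yb] .
  qed (rule ic)
qed

lemma interiorI_eventually: "eventually (\<lambda>y. y \<in> S) (nhds x) \<Longrightarrow> x \<in> interior S"
  unfolding eventually_nhds by (meson interiorI subsetI)

section \<open>Infimal convolution\<close>

lemma SUP_shift: "(SUP x. f (x - c)) = (SUP y. f (y::'a::ab_group_add) :: ereal)"
proof (rule antisym)
  show "(SUP x. f (x - c)) \<le> (SUP y. f y)" by (rule SUP_least) (rule SUP_upper, simp)
  show "(SUP y. f y) \<le> (SUP x. f (x - c))"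
  proof (rule SUP_least)
    fix y show "f y \<le> (SUP x. f (x - c))" using SUP_upper[of "y + c" UNIV "\<lambda>x. f (x - c)"] by simp
  qed
qed

lemma SUP_SUP_add:
  fixes F G :: "_ \<Rightarrow> ereal"
  assumes "(SUP y. F y) \<noteq> -\<infinity>" "(SUP v. G v) \<noteq> -\<infinity>"
  shows "(SUP y. SUP v. F y + G v) = (SUP y. F y) + (SUP v. G v)"
proof (rule antisym)
  show "(SUP y. SUP v. F y + G v) \<le> (SUP y. F y) + (SUP v. G v)"
    by (intro SUP_least add_mono SUP_upper) auto
  let ?A = "{y. F y \<noteq> -\<infinity>}"
  have A: "?A \<noteq> {}" using assms(1) by (auto simp: Sup_eq_MInfty)
  have SA: "(SUP y\<in>?A. F y) = (SUP y. F y)"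
  proof (rule antisym)
    show "(SUP y\<in>?A. F y) \<le> (SUP y. F y)" by (rule SUP_subset_mono) auto
    show "(SUP y. F y) \<le> (SUP y\<in>?A. F y)"
    proof (rule SUP_least)
      fix y show "F y \<le> (SUP y\<in>?A. F y)" by (cases "F y = -\<infinity>") (auto intro: SUP_upper)
    qed
  qed
  have "(SUP y. F y) + (SUP v. G v) = (SUP y\<in>?A. F y + (SUP v. G v))"
    using SUP_ereal_add_left[OF A assms(2), of F] SA by simp
  also have "\<dots> = (SUP y\<in>?A. SUP v. F y + G v)"
    by (intro SUP_cong refl SUP_ereal_add_right[symmetric]) auto
  also have "\<dots> \<le> (SUP y. SUP v. F y + G v)" by (rule SUP_subset_mono) auto
  finally show "(SUP y. F y) + (SUP v. G v) \<le> (SUP y. SUP v. F y + G v)" .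
qed

definition infconv :: "('a::real_vector \<Rightarrow> ereal) \<Rightarrow> ('a \<Rightarrow> ereal) \<Rightarrow> 'a \<Rightarrow> ereal" where
  "infconv J h x = (INF w. J (x - w) + h w)"

lemma infconv_le: "infconv J h x \<le> J (x - w) + h w"
  unfolding infconv_def by (rule INF_lower) simp

lemma infconv_fconj:
  fixes J h :: "'a::real_inner \<Rightarrow> ereal"
  assumes J: "\<And>x. J x \<noteq> -\<infinity>" "\<exists>x. J x < \<infinity>" and h: "\<And>x. h x \<noteq> -\<infinity>" "\<exists>x. h x < \<infinity>"
  shows "fconj (infconv J h) p = fconj J p + fconj h p"
proof -
  have E2: "ereal (inner p x) - (J (x - w) + h w)
      = (ereal (inner p (x - w)) - J (x - w)) + (ereal (inner p w) - h w)" for x w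
    using J(1)[of "x - w"] h(1)[of w]
    by (cases "J (x - w)"; cases "h w") (auto simp: inner_diff_right)
  have shift: "(SUP x. (ereal (inner p (x - w)) - J (x - w)) + (ereal (inner p w) - h w)) =
        (SUP y. (ereal (inner p y) - J y) + (ereal (inner p w) - h w))" for w
    using SUP_shift[of "\<lambda>y. (ereal (inner p y) - J y) + (ereal (inner p w) - h w)" w] by simp
  have "fconj (infconv J h) p = (SUP x. SUP w. ereal (inner p x) - (J (x - w) + h w))"
    unfolding fconj_def infconv_def by (intro SUP_cong refl SUP_ereal_minus_right[symmetric]) auto
  also have "\<dots> = (SUP w. SUP x. (ereal (inner p (x - w)) - J (x - w)) + (ereal (inner p w) - h w))"
    unfolding E2 by (rule SUP_commute)
  also have "\<dots> = (SUP w. SUP y. (ereal (inner p y) - J y) + (ereal (inner p w) - h w))"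
    by (rule SUP_cong[OF refl]) (rule shift)
  also have "\<dots> = (SUP y. SUP w. (ereal (inner p y) - J y) + (ereal (inner p w) - h w))"
    by (rule SUP_commute)
  also have "\<dots> = fconj J p + fconj h p"
    unfolding fconj_def
    by (rule SUP_SUP_add; fold fconj_def; intro fconj_not_minf) (use J h in auto)
  finally show ?thesis .
qed

lemma infconv_econvex:
  fixes J h :: "'a::real_vector \<Rightarrow> ereal"
  assumes cJ: "econvex J" and ch: "econvex h" and J: "\<And>x. J x \<noteq> -\<infinity>" and h: "\<And>x. h x \<noteq> -\<infinity>"
  shows "econvex (infconv J h)"
  unfolding econvex_iff
proof (intro allI impI)
  fix x y r s and u :: real
  assume u: "0 \<le> u" "u \<le> 1" and xr: "infconv J h x \<le> ereal r" and ys: "infconv J h y \<le> ereal s"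
  show "infconv J h ((1 - u) *\<^sub>R x + u *\<^sub>R y) \<le> ereal ((1 - u) * r + u * s)"
  proof (rule ereal_le_epsilon2)
    fix e :: real assume e: "0 < e"
    have "infconv J h x < ereal (r + e)" using le_less_trans[OF xr, of "ereal (r + e)"] e by simp
    then obtain w1 where w1: "J (x - w1) + h w1 < ereal (r + e)" unfolding infconv_def by (auto simp: INF_less_iff)
    then obtain a1 b1 where ab1: "J (x - w1) = ereal a1" "h w1 = ereal b1"
      using J h by (cases "J (x - w1)"; cases "h w1") auto
    have "infconv J h y < ereal (s + e)" using le_less_trans[OF ys, of "ereal (s + e)"] e by simp
    then obtain w2 where w2: "J (y - w2) + h w2 < ereal (s + e)" unfolding infconv_def by (auto simp: INF_less_iff)
    then obtain a2 b2 where ab2: "J (y - w2) = ereal a2" "h w2 = ereal b2"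
      using J h by (cases "J (y - w2)"; cases "h w2") auto
    have s1: "a1 + b1 < r + e" "a2 + b2 < s + e" using w1 w2 ab1 ab2 by auto
    define w where "w = (1 - u) *\<^sub>R w1 + u *\<^sub>R w2"
    have zw: "((1 - u) *\<^sub>R x + u *\<^sub>R y) - w = (1 - u) *\<^sub>R (x - w1) + u *\<^sub>R (y - w2)"
      unfolding w_def by (simp add: algebra_simps)
    have "J ((1 - u) *\<^sub>R (x - w1) + u *\<^sub>R (y - w2)) \<le> ereal ((1 - u) * a1 + u * a2)"
      by (rule econvexD[OF cJ u]) (use ab1 ab2 in auto)
    moreover have "h w \<le> ereal ((1 - u) * b1 + u * b2)"
      unfolding w_def by (rule econvexD[OF ch u]) (use ab1 ab2 in auto)
    ultimately have "J (((1 - u) *\<^sub>R x + u *\<^sub>R y) - w) + h w \<le> ereal ((1 - u) * a1 + u * a2) + ereal ((1 - u) * b1 + u * b2)"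
      unfolding zw by (rule add_mono)
    then have "infconv J h ((1 - u) *\<^sub>R x + u *\<^sub>R y) \<le> ereal ((1 - u) * a1 + u * a2) + ereal ((1 - u) * b1 + u * b2)"
      using infconv_le[of J h "(1 - u) *\<^sub>R x + u *\<^sub>R y" w] by (rule order_trans[rotated])
    also have "\<dots> = ereal ((1 - u) * (a1 + b1) + u * (a2 + b2))" by (simp add: algebra_simps)
    also have "\<dots> \<le> ereal ((1 - u) * (r + e) + u * (s + e))"
      using s1 u by (simp add: add_mono mult_left_mono)
    also have "\<dots> = ereal ((1 - u) * r + u * s) + ereal e" by (simp add: algebra_simps)
    finally show "infconv J h ((1 - u) *\<^sub>R x + u *\<^sub>R y) \<le> ereal ((1 - u) * r + u * s) + ereal e" .
  qed
qed

lemma ereal_add_less_PInf: "(a + b < (\<infinity>::ereal)) = (a < \<infinity> \<and> b < \<infinity>)"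
  by (cases a; cases b) auto

lemma infconv_dom: "infconv J h x < \<infinity> \<longleftrightarrow> (\<exists>w. J (x - w) < \<infinity> \<and> h w < \<infinity>)"
  unfolding infconv_def INF_less_iff ereal_add_less_PInf by simp

lemma infconv_not_minf:
  fixes J h :: "'a::euclidean_space \<Rightarrow> ereal"
  assumes GJ: "Gamma0 J" and CJ: "coercive1 J" and hn: "\<And>w. h w \<noteq> -\<infinity>" and hd: "\<exists>w. h w < \<infinity>"
    and minorant: "\<And>w. ereal (inner p w + c) \<le> h w"
  shows "infconv J h x \<noteq> -\<infinity>"
proof -
  have fc: "fconj (infconv J h) p = fconj J p + fconj h p" for p
    by (rule infconv_fconj) (use Gamma0_not_minf[OF GJ] Gamma0_ex_finite[OF GJ] hn hd in auto)
  have "fconj h p \<le> ereal (- c)"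
  proof (rule fconj_least)
    fix w show "ereal (inner p w) - h w \<le> ereal (- c)"
      using minorant[of w] hn[of w] by (cases "h w") auto
  qed
  moreover obtain j where j: "fconj J p = ereal j" using coercive1_fconj_finite[OF GJ CJ, of p] by auto
  ultimately obtain k where k: "fconj (infconv J h) p = ereal k"
    using fc[of p] fconj_not_minf[OF hd, of p] by (cases "fconj h p") auto
  have "ereal (inner x p) - fconj (infconv J h) p \<le> fconj (fconj (infconv J h)) x" by (rule fconj_upper)
  also have "\<dots> \<le> infconv J h x" by (rule fconj_fconj_le)
  finally show ?thesis using k by auto
qed

lemma infconv_tail_bound:
  fixes J h :: "'a::real_inner \<Rightarrow> ereal"
  assumes CJ: "coercive1 J" and minorant: "\<And>w. ereal (inner p w + c) \<le> h w"
  obtains B where "\<And>y w. dist y x < 1 \<Longrightarrow> B \<le> norm w \<Longrightarrow> ereal d < J (y - w) + h w"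
proof -
  define M where "M = norm p + 1"
  obtain R where R: "\<And>y. norm y \<ge> R \<Longrightarrow> J y \<ge> ereal (M * norm y)"
    using coercive1_lower_bound[OF CJ] by blast
  define B where "B = max (R + norm x + 1) (d + M * (norm x + 1) - c + 1)"
  have "ereal d < J (y - w) + h w" if y: "dist y x < 1" and w: "B \<le> norm w" for y w
  proof -
    have ny: "norm y \<le> norm x + 1" using y norm_triangle_ineq2[of y x] by (simp add: dist_norm)
    have nyw: "norm (y - w) \<ge> norm w - norm y" using norm_triangle_ineq2[of w y] by (simp add: norm_minus_commute)
    have "norm (y - w) \<ge> R" using nyw ny w unfolding B_def by linarith
    then have j: "J (y - w) \<ge> ereal (M * norm (y - w))" by (rule R)
    have "M * norm (y - w) \<ge> M * (norm w - norm x - 1)"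
      using nyw ny unfolding M_def by (intro mult_left_mono) (auto simp: add_nonneg_pos)
    then have j2: "J (y - w) \<ge> ereal (M * (norm w - norm x - 1))" using j by (meson ereal_less_eq(3) order_trans)
    have "inner p w \<ge> - (norm p * norm w)"
      using norm_cauchy_schwarz[of "-p" w] by simp
    then have h2: "h w \<ge> ereal (- (norm p * norm w) + c)"
      using minorant[of w] by (meson add_right_mono ereal_less_eq(3) order_trans)
    have "ereal d < ereal (M * (norm w - norm x - 1)) + ereal (- (norm p * norm w) + c)"
      using w unfolding B_def M_def by (simp add: algebra_simps)
    also have "\<dots> \<le> J (y - w) + h w" using j2 h2 by (rule add_mono)
    finally show ?thesis .
  qed
  then show ?thesis by (rule that)
qed

lemma elsc_diff_add_eventually:
  fixes J h :: "'a::real_normed_vector \<Rightarrow> ereal"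
  assumes lJ: "elsc J" and lh: "elsc h" and J: "\<And>x. J x \<noteq> -\<infinity>" and h: "\<And>w. h w \<noteq> -\<infinity>"
    and d: "ereal d < J (x - w) + h w"
  obtains A V where "open A" "open V" "x \<in> A" "w \<in> V"
    "\<And>a v. a \<in> A \<Longrightarrow> v \<in> V \<Longrightarrow> ereal d < J (a - v) + h v"
proof -
  obtain a b where ab: "ereal a < J (x - w)" "ereal b < h w" "d = a + b"
    using ereal_less_add_split[OF d J h] by blast
  have t1: "((\<lambda>z. fst z - snd z) \<longlongrightarrow> x - w) (nhds (x, w))"
    using tendsto_diff[OF tendsto_fst[OF filterlim_ident] tendsto_snd[OF filterlim_ident], of "(x, w)"] by simp
  have t2: "((\<lambda>z. snd z) \<longlongrightarrow> w) (nhds (x, w))"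
    using tendsto_snd[OF filterlim_ident, of "(x, w)"] by simp
  have "\<forall>\<^sub>F z in nhds (x, w). ereal a < J (fst z - snd z)" by (rule elsc_tendsto[OF lJ t1 ab(1)])
  moreover have "\<forall>\<^sub>F z in nhds (x, w). ereal b < h (snd z)" by (rule elsc_tendsto[OF lh t2 ab(2)])
  ultimately have "\<forall>\<^sub>F z in nhds (x, w). ereal d < J (fst z - snd z) + h (snd z)"
    by eventually_elim (use ab(3) in \<open>auto intro: ereal_add_strict_mono_real\<close>)
  then obtain N where N: "open N" "(x, w) \<in> N" "\<And>z. z \<in> N \<Longrightarrow> ereal d < J (fst z - snd z) + h (snd z)"
    unfolding eventually_nhds by blast
  obtain A V where "open A" "open V" "(x, w) \<in> A \<times> V" "A \<times> V \<subseteq> N" by (rule open_prod_elim[OF N(1,2)])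
  then show ?thesis using that N(3) by fastforce
qed

text \<open>Coercivity of \<open>J\<close> confines the relevant \<open>w\<close> to a ball; on that compact set the joint lower
  semicontinuity of \<open>(y, w) \<mapsto> J (y - w) + h w\<close> gives a uniform neighbourhood of \<open>x\<close>.\<close>

lemma infconv_elsc:
  fixes J h :: "'a::euclidean_space \<Rightarrow> ereal"
  assumes GJ: "Gamma0 J" and CJ: "coercive1 J" and lh: "elsc h" and hn: "\<And>w. h w \<noteq> -\<infinity>"
    and hd: "\<exists>w. h w < \<infinity>" and minorant: "\<And>w. ereal (inner p w + c) \<le> h w"
  shows "elsc (infconv J h)"
proof (rule elscI_finite)
  show "infconv J h x \<noteq> -\<infinity>" for x by (rule infconv_not_minf[OF GJ CJ hn hd minorant])
next
  fix x d0 assume "ereal d0 < infconv J h x"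
  then obtain d where d: "d0 < d" "ereal d < infconv J h x" using ereal_dense2 by force
  obtain B where tail: "\<And>y w. dist y x < 1 \<Longrightarrow> B \<le> norm w \<Longrightarrow> ereal d < J (y - w) + h w"
    by (rule infconv_tail_bound[OF CJ minorant, where x=x and d=d]) blast
  have "\<forall>w. \<exists>AV. open (fst AV) \<and> open (snd AV) \<and> x \<in> fst AV \<and> w \<in> snd AV \<and>
      (\<forall>a\<in>fst AV. \<forall>v\<in>snd AV. ereal d < J (a - v) + h v)"
  proof
    fix w
    have lJ: "elsc J" using GJ by (simp add: Gamma0_def)
    have "ereal d < J (x - w) + h w" using d(2) infconv_le[of J h x w] by order
    then obtain A V where "open A" "open V" "x \<in> A" "w \<in> V"
      "\<And>a v. a \<in> A \<Longrightarrow> v \<in> V \<Longrightarrow> ereal d < J (a - v) + h v"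
      by (rule elsc_diff_add_eventually[OF lJ lh Gamma0_not_minf[OF GJ] hn]) blast
    then show "\<exists>AV. open (fst AV) \<and> open (snd AV) \<and> x \<in> fst AV \<and> w \<in> snd AV \<and>
      (\<forall>a\<in>fst AV. \<forall>v\<in>snd AV. ereal d < J (a - v) + h v)" by (intro exI[of _ "(A, V)"]) auto
  qed
  then obtain AV where AV: "\<And>w. open (fst (AV w)) \<and> open (snd (AV w)) \<and> x \<in> fst (AV w) \<and> w \<in> snd (AV w) \<and>
      (\<forall>a\<in>fst (AV w). \<forall>v\<in>snd (AV w). ereal d < J (a - v) + h v)"
    by (metis (lifting))
  obtain W where W: "W \<subseteq> cball 0 B" "finite W" "cball 0 B \<subseteq> (\<Union>w\<in>W. snd (AV w))"
    by (rule compactE_image[of "cball 0 B" "cball 0 B" "\<lambda>w. snd (AV w)"]) (use AV in auto)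
  define U where "U = ball x 1 \<inter> (\<Inter>w\<in>W. fst (AV w))"
  have U: "open U" "x \<in> U" unfolding U_def using AV W(2) by auto
  have "ereal d \<le> infconv J h y" if "y \<in> U" for y
    unfolding infconv_def
  proof (rule INF_greatest)
    fix w
    have yb: "dist y x < 1" using that unfolding U_def by (auto simp: dist_commute)
    show "ereal d \<le> J (y - w) + h w"
    proof (cases "B \<le> norm w")
      case True then show ?thesis using tail[OF yb True] by simp
    next
      case False
      then have "w \<in> cball 0 B" by simp
      then obtain w' where "w' \<in> W" "w \<in> snd (AV w')" using W(3) by blast
      moreover then have "y \<in> fst (AV w')" using that unfolding U_def by auto
      ultimately show ?thesis using AV[of w'] by fastforce
    qed
  qed
  then have "\<forall>y\<in>U. ereal d0 < infconv J h y" using d(1) by (metis less_ereal.simps(1) less_le_trans)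
  then show "\<forall>\<^sub>F y in nhds x. ereal d0 < infconv J h y"
    unfolding eventually_nhds using U by blast
qed

lemma infconv_Gamma0:
  fixes J h :: "'a::euclidean_space \<Rightarrow> ereal"
  assumes GJ: "Gamma0 J" and CJ: "coercive1 J" and Gh: "Gamma0 h"
    and minorant: "\<And>w. ereal (inner p w + c) \<le> h w"
  shows "Gamma0 (infconv J h)"
proof -
  have hn: "\<And>w. h w \<noteq> -\<infinity>" and hd: "\<exists>w. h w < \<infinity>" using Gh unfolding Gamma0_def eproper_def by auto
  obtain x0 where x0: "J x0 < \<infinity>" using Gamma0_ex_finite[OF GJ] by blast
  obtain w0 where w0: "h w0 < \<infinity>" using hd by blast
  have "J ((x0 + w0) - w0) < \<infinity>" using x0 by simp
  then have "infconv J h (x0 + w0) < \<infinity>" using infconv_dom[of J h "x0 + w0"] w0 by blast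
  then have "eproper (infconv J h)" unfolding eproper_def using infconv_not_minf[OF GJ CJ hn hd minorant] by blast
  moreover have "econvex (infconv J h)"
    by (rule infconv_econvex) (use GJ Gh Gamma0_not_minf in \<open>auto simp: Gamma0_def\<close>)
  moreover have "elsc (infconv J h)"
    by (rule infconv_elsc[OF GJ CJ _ hn hd minorant]) (use Gh in \<open>simp add: Gamma0_def\<close>)
  ultimately show ?thesis unfolding Gamma0_def by blast
qed

section \<open>Indicators, perspectives and subgradients\<close>

lemma ind_Gamma0:
  fixes K :: "'a::euclidean_space set"
  assumes "closed K" "convex K" "K \<noteq> {}"
  shows "Gamma0 (ind K)"
  unfolding Gamma0_def
proof (intro conjI)
  show "eproper (ind K)" unfolding eproper_def ind_def using assms(3) by auto
  show "econvex (ind K)" unfolding econvex_iff ind_def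
    using assms(2) by (auto simp: convex_alt split: if_splits)
  show "elsc (ind K)"
  proof (rule elscI)
    fix x c assume c: "c < ind K x"
    show "\<forall>\<^sub>F y in nhds x. c < ind K y"
    proof (cases "x \<in> K")
      case True
      then have "c < 0" using c unfolding ind_def by simp
      then show ?thesis unfolding ind_def by (intro always_eventually) (auto intro: less_le_trans)
    next
      case False
      have "open (- K)" using assms(1) by auto
      then have "\<forall>\<^sub>F y in nhds x. y \<in> - K" using False by (intro eventually_nhds_in_open) auto
      moreover have cinf: "c < \<infinity>" using c by (meson less_le_trans ereal_less_eq(1))
      ultimately show ?thesis
      proof (elim eventually_mono)
        fix y assume "y \<in> - K" then show "c < ind K y" using cinf by (simp add: ind_def)
      qed
    qed
  qed
qed

lemma fconj_add_ind_closure: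
  fixes K :: "'a::euclidean_space set"
  assumes cont: "continuous_on UNIV \<phi>"
  shows "fconj (\<lambda>p. ereal (\<phi> p) + ind (closure K) p) q = fconj (\<lambda>p. ereal (\<phi> p) + ind K p) q"
proof (rule antisym)
  show "fconj (\<lambda>p. ereal (\<phi> p) + ind K p) q \<le> fconj (\<lambda>p. ereal (\<phi> p) + ind (closure K) p) q"
    by (rule fconj_antimono) (auto simp: ind_def dest: closure_subset[THEN subsetD])
  let ?F = "fconj (\<lambda>p. ereal (\<phi> p) + ind K p) q"
  show "fconj (\<lambda>p. ereal (\<phi> p) + ind (closure K) p) q \<le> ?F"
  proof (rule fconj_least)
    fix p
    show "ereal (inner q p) - (ereal (\<phi> p) + ind (closure K) p) \<le> ?F"
    proof (cases "p \<in> closure K")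
      case False then show ?thesis by (simp add: ind_def)
    next
      case True
      then have Kne: "K \<noteq> {}" by auto
      then obtain k where k: "k \<in> K" by auto
      have "ereal (inner q k) - (ereal (\<phi> k) + ind K k) \<le> ?F" by (rule fconj_upper)
      then have Fnm: "?F \<noteq> -\<infinity>" using k by (auto simp: ind_def)
      show ?thesis
      proof (cases ?F)
        case PInf then show ?thesis by simp
      next
        case MInf then show ?thesis using Fnm by simp
      next
        case (real s)
        have sub: "K \<subseteq> {p. inner q p - \<phi> p \<le> s}"
        proof
          fix k assume k: "k \<in> K"
          have "ereal (inner q k) - (ereal (\<phi> k) + ind K k) \<le> ?F" by (rule fconj_upper)
          then show "k \<in> {p. inner q p - \<phi> p \<le> s}" using k real by (simp add: ind_def)
        qed
        have "closed {p. inner q p - \<phi> p \<le> s}"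
          by (intro closed_Collect_le continuous_intros continuous_on_subset[OF cont]) auto
        then have "closure K \<subseteq> {p. inner q p - \<phi> p \<le> s}" using sub by (rule closure_minimal[rotated])
        then show ?thesis using True real by (auto simp: ind_def)
      qed
    qed
  qed
qed

lemma fconj_ind_closure:
  fixes K :: "'a::euclidean_space set"
  shows "fconj (ind (closure K)) q = fconj (ind K) q"
  using fconj_add_ind_closure[of "\<lambda>_. 0" K q] by (simp add: zero_ereal_def[symmetric])

lemma SUP_rescale:
  fixes F :: "'a::real_vector \<Rightarrow> ereal"
  assumes "t \<noteq> 0"
  shows "(SUP w. F w) = (SUP v. F (t *\<^sub>R v))"
proof (rule antisym)
  show "(SUP w. F w) \<le> (SUP v. F (t *\<^sub>R v))"
  proof (rule SUP_least)
    fix w :: 'a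
    have "t *\<^sub>R ((1/t) *\<^sub>R w) = w" using assms by simp
    then show "F w \<le> (SUP v. F (t *\<^sub>R v))"
      using SUP_upper[of "(1/t) *\<^sub>R w" UNIV "\<lambda>v. F (t *\<^sub>R v)"] assms by (simp add: scaleR_scaleR)
  qed
  show "(SUP v. F (t *\<^sub>R v)) \<le> (SUP w. F w)" by (rule SUP_least) (rule SUP_upper, simp)
qed

lemma INF_rescale:
  fixes F :: "'a::real_vector \<Rightarrow> ereal"
  assumes "t \<noteq> 0"
  shows "(INF w. F w) = (INF v. F (t *\<^sub>R v))"
proof (rule antisym)
  show "(INF v. F (t *\<^sub>R v)) \<le> (INF w. F w)"
  proof (rule INF_greatest)
    fix w :: 'a
    have "t *\<^sub>R ((1/t) *\<^sub>R w) = w" using assms by simp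
    then show "(INF v. F (t *\<^sub>R v)) \<le> F w"
      using INF_lower[of "(1/t) *\<^sub>R w" UNIV "\<lambda>v. F (t *\<^sub>R v)"] assms by (simp add: scaleR_scaleR)
  qed
  show "(INF w. F w) \<le> (INF v. F (t *\<^sub>R v))" by (rule INF_greatest) (rule INF_lower, simp)
qed

lemma Gamma0_perspective:
  fixes f :: "'a::euclidean_space \<Rightarrow> ereal"
  assumes G: "Gamma0 f" and t: "t > 0"
  shows "Gamma0 (\<lambda>w. ereal t * f ((1/t) *\<^sub>R w))"
  unfolding Gamma0_def
proof (intro conjI)
  let ?h = "\<lambda>w. ereal t * f ((1/t) *\<^sub>R w)"
  obtain x0 where x0: "f x0 < \<infinity>" using Gamma0_ex_finite[OF G] by blast
  have "?h (t *\<^sub>R x0) < \<infinity>" using x0 t by (cases "f x0") auto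
  moreover have "?h w \<noteq> -\<infinity>" for w using Gamma0_not_minf[OF G, of "(1/t) *\<^sub>R w"] t
    by (cases "f ((1/t) *\<^sub>R w)") auto
  ultimately show "eproper ?h" unfolding eproper_def by blast
  show "econvex ?h" unfolding econvex_iff
  proof (intro allI impI)
    fix x y r s and u :: real
    assume u: "0 \<le> u" "u \<le> 1" and xr: "?h x \<le> ereal r" and ys: "?h y \<le> ereal s"
    have "f ((1/t) *\<^sub>R x) \<le> ereal (r/t)" "f ((1/t) *\<^sub>R y) \<le> ereal (s/t)"
      using xr ys ereal_mult_pos_le_iff[OF t] by auto
    then have "f ((1 - u) *\<^sub>R ((1/t) *\<^sub>R x) + u *\<^sub>R ((1/t) *\<^sub>R y)) \<le> ereal ((1 - u) * (r/t) + u * (s/t))"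
      using G unfolding Gamma0_def by (intro econvexD[OF _ u]) auto
    moreover have "(1 - u) *\<^sub>R ((1/t) *\<^sub>R x) + u *\<^sub>R ((1/t) *\<^sub>R y) = (1/t) *\<^sub>R ((1 - u) *\<^sub>R x + u *\<^sub>R y)"
      by (simp only: scaleR_add_right scaleR_scaleR mult.commute)
    moreover have "(1 - u) * (r/t) + u * (s/t) = ((1 - u) * r + u * s) / t" by (simp add: add_divide_distrib)
    ultimately show "?h ((1 - u) *\<^sub>R x + u *\<^sub>R y) \<le> ereal ((1 - u) * r + u * s)"
      using ereal_mult_pos_le_iff[OF t] by simp
  qed
  show "elsc ?h"
  proof (rule elscI)
    fix x c assume c: "c < ?h x"
    then have c': "c * ereal (1/t) < f ((1/t) *\<^sub>R x)" using ereal_less_mult_pos_iff[OF t] by blast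
    have "((\<lambda>w. (1/t) *\<^sub>R w) \<longlongrightarrow> (1/t) *\<^sub>R x) (nhds x)"
      by (intro tendsto_scaleR tendsto_const filterlim_ident)
    moreover have lf: "elsc f" using G unfolding Gamma0_def by blast
    ultimately have "\<forall>\<^sub>F w in nhds x. c * ereal (1/t) < f ((1/t) *\<^sub>R w)"
      using elsc_tendsto[of f "\<lambda>w. (1/t) *\<^sub>R w" "(1/t) *\<^sub>R x" "nhds x" "c * ereal (1/t)"] c' by blast
    then show "\<forall>\<^sub>F w in nhds x. c < ?h w" using ereal_less_mult_pos_iff[OF t] by simp
  qed
qed

lemma fconj_perspective:
  fixes f :: "'a::euclidean_space \<Rightarrow> ereal"
  assumes nm: "\<And>x. f x \<noteq> -\<infinity>" and t: "t > 0"
  shows "fconj (\<lambda>w. ereal t * f ((1/t) *\<^sub>R w)) p = ereal t * fconj f p"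
proof -
  have "fconj (\<lambda>w. ereal t * f ((1/t) *\<^sub>R w)) p = (SUP v. ereal (inner p (t *\<^sub>R v)) - ereal t * f ((1/t) *\<^sub>R (t *\<^sub>R v)))"
    unfolding fconj_def using t by (intro SUP_rescale) simp
  also have "\<dots> = (SUP v. ereal t * (ereal (inner p v) - f v))"
  proof (intro SUP_cong refl)
    fix v
    show "ereal (inner p (t *\<^sub>R v)) - ereal t * f ((1/t) *\<^sub>R (t *\<^sub>R v)) = ereal t * (ereal (inner p v) - f v)"
      using t nm[of v] by (cases "f v") (auto simp: algebra_simps)
  qed
  also have "\<dots> = ereal t * fconj f p" unfolding fconj_def using t by (intro Sup_ereal_mult_left'[symmetric]) auto
  finally show ?thesis .
qed

lemma subdiff_iff_conj:
  "q \<in> subdiff f x \<longleftrightarrow> \<bar>f x\<bar> \<noteq> \<infinity> \<and> fconj f q \<le> ereal (inner q x) - f x"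
proof
  assume q: "q \<in> subdiff f x"
  then obtain v where v: "f x = ereal v" unfolding subdiff_def by (cases "f x") auto
  have "fconj f q \<le> ereal (inner q x) - f x"
  proof (rule fconj_least)
    fix y
    have "f x + ereal (inner q (y - x)) \<le> f y" using q unfolding subdiff_def by auto
    then show "ereal (inner q y) - f y \<le> ereal (inner q x) - f x"
      using v by (cases "f y") (auto simp: inner_diff_right)
  qed
  then show "\<bar>f x\<bar> \<noteq> \<infinity> \<and> fconj f q \<le> ereal (inner q x) - f x" using v by simp
next
  assume a: "\<bar>f x\<bar> \<noteq> \<infinity> \<and> fconj f q \<le> ereal (inner q x) - f x"
  then obtain v where v: "f x = ereal v" by (cases "f x") auto
  have "f x + ereal (inner q (y - x)) \<le> f y" for y
  proof -
    have "ereal (inner q y) - f y \<le> ereal (inner q x) - f x" using order_trans[OF fconj_upper[of q y f] conjunct2[OF a]] .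
    then show ?thesis using v by (cases "f y") (auto simp: inner_diff_right)
  qed
  then show "q \<in> subdiff f x" unfolding subdiff_def using a by auto
qed

lemma inner_pair_bound:
  fixes a :: "'a::real_inner" and w :: "'a \<times> real"
  shows "\<bar>inner (a, b) w\<bar> \<le> (norm a + \<bar>b\<bar>) * norm w"
proof -
  obtain w1 w2 where w: "w = (w1, w2)" by fastforce
  have "\<bar>inner a w1\<bar> \<le> norm a * norm w1" by (rule Cauchy_Schwarz_ineq2)
  also have "\<dots> \<le> norm a * norm w" using norm_fst_le[where x=w1 and y=w2] w by (simp add: mult_left_mono)
  finally have 1: "\<bar>inner a w1\<bar> \<le> norm a * norm w" .
  have "\<bar>b * w2\<bar> \<le> \<bar>b\<bar> * norm w" using norm_snd_le[where x=w1 and y=w2] w by (simp add: abs_mult mult_left_mono)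
  then show ?thesis using 1 w by (simp add: inner_Pair algebra_simps)
qed

lemma convex_strict_epigraph:
  fixes f :: "'a::real_vector \<Rightarrow> ereal"
  assumes cf: "econvex f" and nm: "\<And>y. f y \<noteq> -\<infinity>"
  shows "convex {(y, r). f y < ereal (c + r)}"
  unfolding convex_alt
proof (clarsimp)
  fix y1 r1 y2 r2 and u :: real
  assume h: "f y1 < ereal (c + r1)" "f y2 < ereal (c + r2)" "0 \<le> u" "u \<le> 1"
  obtain a1 a2 where a: "f y1 = ereal a1" "f y2 = ereal a2"
    using h(1,2) nm[of y1] nm[of y2] by (cases "f y1"; cases "f y2") auto
  have "f ((1 - u) *\<^sub>R y1 + u *\<^sub>R y2) \<le> ereal ((1 - u) * a1 + u * a2)"
    using a h(3,4) by (intro econvexD[OF cf]) auto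
  also have "(1 - u) * a1 + u * a2 < (1 - u) * (c + r1) + u * (c + r2)"
  proof (cases "u = 0")
    case False
    then have "u * a2 < u * (c + r2)" using a h by simp
    moreover have "(1 - u) * a1 \<le> (1 - u) * (c + r1)" using a h by (intro mult_left_mono) auto
    ultimately show ?thesis by linarith
  qed (use a h in simp)
  finally show "f ((1 - u) *\<^sub>R y1 + u *\<^sub>R y2) < ereal (c + ((1 - u) * r1 + u * r2))"
    by (simp add: algebra_simps)
qed

lemma convex_hypograph_diff:
  fixes \<phi> :: "'a::real_vector \<Rightarrow> real"
  assumes "convex_on UNIV \<phi>"
  shows "convex {(y, r::real). r \<le> c - \<phi> y}"
  unfolding convex_alt
proof (clarsimp)
  fix y1 r1 y2 r2 and u :: real
  assume h: "r1 \<le> c - \<phi> y1" "r2 \<le> c - \<phi> y2" "0 \<le> u" "u \<le> 1"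
  have "\<phi> ((1 - u) *\<^sub>R y1 + u *\<^sub>R y2) \<le> (1 - u) * \<phi> y1 + u * \<phi> y2"
    using convex_onD[OF assms] h by auto
  moreover have "(1 - u) * r1 + u * r2 \<le> (1 - u) * (c - \<phi> y1) + u * (c - \<phi> y2)"
    using h by (intro add_mono mult_left_mono) auto
  ultimately show "(1 - u) * r1 + u * r2 \<le> c - \<phi> ((1 - u) *\<^sub>R y1 + u *\<^sub>R y2)"
    by (simp add: algebra_simps)
qed

text \<open>If \<open>q\<close> minimises \<open>f + \<phi>\<close> with \<open>\<phi>\<close> convex and finite, the strict epigraph of \<open>f - f q\<close> and
  the hypograph of \<open>\<phi> q - \<phi>\<close> are disjoint convex sets; a separating hyperplane cannot be
  vertical, and its slope is a subgradient of \<open>f\<close> at \<open>q\<close>.\<close>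

lemma min_add_convex_separation:
  fixes f :: "'a::euclidean_space \<Rightarrow> ereal" and \<phi> :: "'a \<Rightarrow> real"
  assumes cf: "econvex f" and nm: "\<And>y. f y \<noteq> -\<infinity>" and fq: "f q = ereal v"
    and c\<phi>: "convex_on UNIV \<phi>" and min: "\<And>y. ereal (v + \<phi> q) \<le> f y + ereal (\<phi> y)"
  obtains a \<alpha> b where "\<alpha> < 0" "b \<le> inner a q" "\<And>y r. f y < ereal (v + r) \<Longrightarrow> inner a y + \<alpha> * r \<le> b"
proof -
  define A where "A = {(y, r). f y < ereal (v + r)}"
  define B where "B = {(y, r::real). r \<le> \<phi> q - \<phi> y}"
  have qA: "(q, r) \<in> A" if "r > 0" for r using fq that unfolding A_def by simp
  have qB: "(q, 0) \<in> B" unfolding B_def by simp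
  have "A \<inter> B = {}"
  proof (rule ccontr)
    assume "A \<inter> B \<noteq> {}"
    then obtain y r where "f y < ereal (v + r)" "r \<le> \<phi> q - \<phi> y" unfolding A_def B_def by auto
    then have "f y + ereal (\<phi> y) < ereal (v + \<phi> q)" by (cases "f y") auto
    then show False using min[of y] by simp
  qed
  moreover have "A \<noteq> {}" "B \<noteq> {}" using qA[of 1] qB by auto
  moreover have "convex A" "convex B"
    unfolding A_def B_def by (rule convex_strict_epigraph[OF cf nm], rule convex_hypograph_diff[OF c\<phi>])
  ultimately obtain w b where w: "w \<noteq> 0" "\<forall>z\<in>A. inner w z \<le> b" "\<forall>z\<in>B. inner w z \<ge> b"
    using separating_hyperplane_sets by metis
  obtain a \<alpha> where wa: "w = (a, \<alpha>)" by fastforce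
  have Ai: "inner a y + \<alpha> * r \<le> b" if "(y, r) \<in> A" for y r using w(2) that wa by (auto simp: inner_Pair)
  have Bi: "inner a y + \<alpha> * r \<ge> b" if "(y, r) \<in> B" for y r using w(3) that wa by (auto simp: inner_Pair)
  have bq: "b \<le> inner a q" using Bi[OF qB] by simp
  have "\<alpha> \<le> 0"
  proof (rule ccontr)
    assume "\<not> \<alpha> \<le> 0"
    then have "\<alpha> * ((\<bar>b - inner a q\<bar> + 1) / \<alpha>) = \<bar>b - inner a q\<bar> + 1" by simp
    moreover have "(\<bar>b - inner a q\<bar> + 1) / \<alpha> > 0" using \<open>\<not> \<alpha> \<le> 0\<close> by simp
    ultimately show False using Ai[OF qA] by fastforce
  qed
  moreover have "\<alpha> \<noteq> 0"
  proof
    assume a0: "\<alpha> = 0"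
    have "inner a q \<le> b" using Ai[OF qA[of 1]] a0 by simp
    moreover have "inner a (q - a) \<ge> b" using Bi[of "q - a" "\<phi> q - \<phi> (q - a)"] a0 unfolding B_def by simp
    ultimately have "inner a a \<le> 0" by (simp add: inner_diff_right)
    then have "a = 0" by (metis inner_gt_zero_iff not_le)
    then show False using w(1) wa a0 by (simp add: zero_prod_def)
  qed
  ultimately have "\<alpha> < 0" by simp
  moreover have "inner a y + \<alpha> * r \<le> b" if "f y < ereal (v + r)" for y r
    using Ai that unfolding A_def by simp
  ultimately show ?thesis using that bq by blast
qed

lemma subdiff_nonempty_if_min_add_convex:
  fixes f :: "'a::euclidean_space \<Rightarrow> ereal" and \<phi> :: "'a \<Rightarrow> real"
  assumes cf: "econvex f" and nm: "\<And>y. f y \<noteq> -\<infinity>" and fq: "f q = ereal v"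
    and c\<phi>: "convex_on UNIV \<phi>" and min: "\<And>y. ereal (v + \<phi> q) \<le> f y + ereal (\<phi> y)"
  shows "subdiff f q \<noteq> {}"
proof -
  obtain a \<alpha> b where aneg: "- \<alpha> > 0" and bq: "b \<le> inner a q"
    and Ai: "\<And>y r. f y < ereal (v + r) \<Longrightarrow> inner a y + \<alpha> * r \<le> b"
    using min_add_convex_separation[OF assms] by (metis neg_0_less_iff_less)
  define g where "g = (1 / (- \<alpha>)) *\<^sub>R a"
  have "g \<in> subdiff f q" unfolding subdiff_def
  proof (intro CollectI conjI allI)
    show "\<bar>f q\<bar> \<noteq> \<infinity>" using fq by simp
    fix y
    have g: "inner g (y - q) = inner a (y - q) / - \<alpha>" unfolding g_def by simp
    show "f q + ereal (inner g (y - q)) \<le> f y"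
    proof (cases "f y")
      case (real s)
      have "inner a (y - q) / - \<alpha> \<le> s - v"
      proof (rule dense_ge)
        fix r assume "s - v < r"
        then have "inner a y + \<alpha> * r \<le> b" using real by (intro Ai) simp
        then have "inner a (y - q) \<le> (- \<alpha>) * r" using bq by (simp add: inner_diff_right)
        then show "inner a (y - q) / - \<alpha> \<le> r" by (metis pos_divide_le_eq[OF aneg] mult.commute)
      qed
      then show ?thesis using real fq g by simp
    next
      case MInf then show ?thesis using nm by simp
    qed simp
  qed
  then show ?thesis by blast
qed

lemma convex_on_inner_left: "convex_on UNIV (\<lambda>y. inner y c)"
  by (rule convex_onI) (simp_all add: inner_add_left)

section \<open>The Hopf--Lax function\<close>

locale hopf_lax =
  fixes J H :: "'a::euclidean_space \<Rightarrow> ereal"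
  assumes GJ: "Gamma0 J" and GH: "Gamma0 H" and CJ: "coercive1 J" and LH: "legendre H"
begin

definition Jstar :: "'a \<Rightarrow> real" where "Jstar = rfun (fconj J)"

lemma fconj_J_real: "fconj J p = ereal (Jstar p)"
  using coercive1_fconj_finite[OF GJ CJ, of p] unfolding Jstar_def rfun_def by (metis ereal_real')

lemma Jstar_continuous: "continuous_on UNIV Jstar"
  unfolding Jstar_def by (rule econvex_finite_continuous[OF fconj_econvex coercive1_fconj_finite[OF GJ CJ]])

lemma H_not_minf: "H p \<noteq> -\<infinity>" using Gamma0_not_minf[OF GH] .
lemma J_not_minf: "J p \<noteq> -\<infinity>" using Gamma0_not_minf[OF GJ] .

lemma fconj_fconj_H: "fconj (fconj H) p = H p" by (rule fenchel_moreau[OF GH])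

lemma Gamma0_fconj_H: "Gamma0 (fconj H)" by (rule fconj_Gamma0[OF GH])

lemma fconj_H_not_minf: "fconj H v \<noteq> -\<infinity>" using Gamma0_not_minf[OF Gamma0_fconj_H] .

definition domH :: "'a set" where "domH = edom H"

lemma domH_nonempty: "domH \<noteq> {}" using Gamma0_ex_finite[OF GH] unfolding domH_def edom_def by auto

lemma convex_domH: "convex domH"
  unfolding domH_def by (rule convex_edom) (use GH H_not_minf in \<open>auto simp: Gamma0_def\<close>)

definition p0 :: "'a" where "p0 = (SOME p. p \<in> domH)"
definition h0 :: "real" where "h0 = real_of_ereal (H p0)"

lemma p0_domH: "p0 \<in> domH" unfolding p0_def using domH_nonempty by (simp add: some_in_eq)

lemma H_p0: "H p0 = ereal h0"
  using p0_domH H_not_minf[of p0] unfolding h0_def domH_def edom_def by (cases "H p0") auto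

definition persp_Hstar :: "real \<Rightarrow> 'a \<Rightarrow> ereal" where "persp_Hstar t w = ereal t * fconj H ((1/t) *\<^sub>R w)"

definition St :: "real \<Rightarrow> 'a \<Rightarrow> ereal" where "St t x = (INF v. J (x - t *\<^sub>R v) + ereal t * fconj H v)"

lemma St_infconv: assumes t: "t > 0" shows "St t x = infconv J (persp_Hstar t) x"
proof -
  have "infconv J (persp_Hstar t) x = (INF v. J (x - t *\<^sub>R v) + persp_Hstar t (t *\<^sub>R v))"
    unfolding infconv_def using t by (intro INF_rescale) simp
  also have "\<dots> = St t x" unfolding St_def persp_Hstar_def using t by simp
  finally show ?thesis by simp
qed

lemma Gamma0_persp_Hstar: "t > 0 \<Longrightarrow> Gamma0 (persp_Hstar t)"
  unfolding persp_Hstar_def by (rule Gamma0_perspective[OF Gamma0_fconj_H])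

lemma persp_Hstar_affine_minorant: assumes t: "t > 0" shows "ereal (inner p0 w + (- t * h0)) \<le> persp_Hstar t w"
proof -
  have "ereal (inner ((1/t) *\<^sub>R w) p0) - H p0 \<le> fconj H ((1/t) *\<^sub>R w)" by (rule fconj_upper)
  then have "ereal ((1/t) * inner p0 w - h0) \<le> fconj H ((1/t) *\<^sub>R w)" using H_p0 by (simp add: inner_commute)
  then have "ereal t * ereal ((1/t) * inner p0 w - h0) \<le> persp_Hstar t w" unfolding persp_Hstar_def
    using t by (intro ereal_mult_left_mono) auto
  moreover have "t * ((1/t) * inner p0 w - h0) = inner p0 w + (- t * h0)" using t by (simp add: algebra_simps)
  ultimately show ?thesis by simp
qed

lemma Gamma0_St: "t > 0 \<Longrightarrow> Gamma0 (St t)"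
  using infconv_Gamma0[OF GJ CJ Gamma0_persp_Hstar persp_Hstar_affine_minorant] St_infconv by (metis ext)

lemma fconj_St: assumes t: "t > 0" shows "fconj (St t) p = fconj J p + ereal t * H p"
proof -
  have hG: "Gamma0 (persp_Hstar t)" by (rule Gamma0_persp_Hstar[OF t])
  have "fconj (St t) p = fconj (infconv J (persp_Hstar t)) p" using St_infconv[OF t] by (metis ext)
  also have "\<dots> = fconj J p + fconj (persp_Hstar t) p"
    by (rule infconv_fconj) (use J_not_minf Gamma0_ex_finite[OF GJ] Gamma0_not_minf[OF hG] Gamma0_ex_finite[OF hG] in auto)
  also have "fconj (persp_Hstar t) p = ereal t * fconj (fconj H) p" unfolding persp_Hstar_def by (rule fconj_perspective[OF fconj_H_not_minf t])
  finally show ?thesis using fconj_fconj_H by simp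
qed

lemma St_fconj_fconj: assumes t: "t > 0" shows "St t x = fconj (\<lambda>p. fconj J p + ereal t * H p) x"
proof -
  have "St t x = fconj (fconj (St t)) x" using fenchel_moreau[OF Gamma0_St[OF t]] by simp
  also have "fconj (St t) = (\<lambda>p. fconj J p + ereal t * H p)" using fconj_St[OF t] by (rule ext)
  finally show ?thesis .
qed

definition sigmaH :: "'a \<Rightarrow> ereal" where "sigmaH = fconj (ind domH)"

lemma sigmaH_closure: "sigmaH = fconj (ind (closure domH))"
  unfolding sigmaH_def using fconj_ind_closure[of domH] by (rule ext[symmetric])

lemma Gamma0_ind_closure_domH: "Gamma0 (ind (closure domH))"
  by (rule ind_Gamma0) (use domH_nonempty convex_domH convex_closure in auto)

lemma Gamma0_sigmaH: "Gamma0 sigmaH" unfolding sigmaH_closure by (rule fconj_Gamma0[OF Gamma0_ind_closure_domH])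

lemma sigmaH_affine_minorant: "ereal (inner p0 w + 0) \<le> sigmaH w"
  unfolding sigmaH_def using fconj_upper[of w p0 "ind domH"] p0_domH by (simp add: ind_def inner_commute)

lemma Gamma0_infconv_sigmaH: "Gamma0 (infconv J sigmaH)" by (rule infconv_Gamma0[OF GJ CJ Gamma0_sigmaH sigmaH_affine_minorant])

lemma fconj_infconv_sigmaH: "fconj (infconv J sigmaH) p = fconj J p + ind (closure domH) p"
proof -
  have "fconj (infconv J sigmaH) p = fconj J p + fconj sigmaH p"
    by (rule infconv_fconj) (use J_not_minf Gamma0_ex_finite[OF GJ] Gamma0_not_minf[OF Gamma0_sigmaH] Gamma0_ex_finite[OF Gamma0_sigmaH] in auto)
  also have "fconj sigmaH p = ind (closure domH) p" unfolding sigmaH_closure by (rule fenchel_moreau[OF Gamma0_ind_closure_domH])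
  finally show ?thesis .
qed

definition S0 :: "'a \<Rightarrow> ereal" where "S0 x = fconj (\<lambda>p. fconj J p + ind domH p) x"

lemma S0_closure: "S0 x = fconj (\<lambda>p. fconj J p + ind (closure domH) p) x"
  unfolding S0_def fconj_J_real using fconj_add_ind_closure[OF Jstar_continuous, of domH x] by simp

lemma S0_infconv: "S0 x = infconv J sigmaH x"
proof -
  have "infconv J sigmaH x = fconj (fconj (infconv J sigmaH)) x" using fenchel_moreau[OF Gamma0_infconv_sigmaH] by simp
  also have "fconj (infconv J sigmaH) = (\<lambda>p. fconj J p + ind (closure domH) p)" using fconj_infconv_sigmaH by (rule ext)
  finally show ?thesis using S0_closure by simp
qed

lemma hlS_cases: "hlS J H (x, t) = (if t > 0 then St t x else if t = 0 then S0 x else \<infinity>)"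
  unfolding hlS_def St_def S0_def domH_def by simp

definition dual_constraint :: "('a \<times> real) set" where "dual_constraint = {(q, e). q \<in> edom H \<and> ereal e + H q \<le> 0}"

lemma dual_constraint_iff: "(p, E) \<in> dual_constraint \<longleftrightarrow> (\<exists>h. H p = ereal h \<and> E + h \<le> 0)"
  unfolding dual_constraint_def edom_def using H_not_minf[of p] by (cases "H p") auto

lemma SUP_St_dual:
  assumes t: "t > 0"
  shows "(SUP x. ereal (inner p x + E * t) - St t x) = ereal (E * t) + (fconj J p + ereal t * H p)"
proof -
  have "(SUP x. ereal (inner p x + E * t) - St t x) = (SUP x. ereal (E * t) + (ereal (inner p x) - St t x))"
  proof (intro SUP_cong refl)
    fix x show "ereal (inner p x + E * t) - St t x = ereal (E * t) + (ereal (inner p x) - St t x)"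
      by (cases "St t x") auto
  qed
  also have "\<dots> = ereal (E * t) + fconj (St t) p" unfolding fconj_def by (rule SUP_ereal_add_right) auto
  finally show ?thesis using fconj_St[OF t] by simp
qed

lemma fconj_S0_le: "fconj S0 p \<le> fconj J p + ind domH p"
  unfolding S0_def[abs_def] by (rule fconj_fconj_le)

lemma fconj_hlS_le: "fconj (hlS J H) (p, E) \<le> fconj J p + ind dual_constraint (p, E)"
proof (rule fconj_least)
  fix z :: "'a \<times> real"
  obtain x t where z: "z = (x, t)" by fastforce
  show "ereal (inner (p, E) z) - hlS J H z \<le> fconj J p + ind dual_constraint (p, E)"
  proof (cases "(p, E) \<in> dual_constraint")
    case False then show ?thesis by (simp add: ind_def fconj_J_real)
  next
    case True
    then obtain h where h: "H p = ereal h" "E + h \<le> 0" using dual_constraint_iff by blast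
    have pC: "p \<in> domH" using h unfolding domH_def edom_def by simp
    consider "t > 0" | "t = 0" | "t < 0" by linarith
    then show ?thesis
    proof cases
      case 1
      have "ereal (inner (p, E) z) - hlS J H z \<le> (SUP x. ereal (inner p x + E * t) - St t x)"
        using 1 by (intro SUP_upper2[of x]) (auto simp: z hlS_cases inner_Pair)
      also have "\<dots> = ereal (E * t + Jstar p + t * h)" using SUP_St_dual[OF 1] h by (simp add: fconj_J_real)
      also have "\<dots> \<le> ereal (Jstar p)"
      proof -
        have "E * t + t * h = t * (E + h)" by (simp add: algebra_simps)
        also have "\<dots> \<le> 0" using 1 h(2) by (simp add: mult_nonneg_nonpos)
        finally show ?thesis by simp
      qed
      finally show ?thesis using True by (simp add: ind_def fconj_J_real)
    next
      case 2
      have "ereal (inner (p, E) z) - hlS J H z = ereal (inner p x) - S0 x"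
        using 2 by (simp add: z hlS_cases inner_Pair)
      also have "\<dots> \<le> fconj S0 p" using fconj_upper[of p x S0] .
      also have "\<dots> \<le> fconj J p + ind domH p" by (rule fconj_S0_le)
      finally show ?thesis using True pC by (simp add: ind_def)
    next
      case 3 then show ?thesis by (simp add: z hlS_cases)
    qed
  qed
qed

lemma slice_le_fconj_hlS:
  assumes t: "t > 0"
  shows "ereal (E * t) + (fconj J p + ereal t * H p) \<le> fconj (hlS J H) (p, E)"
proof -
  have "(SUP x. ereal (inner p x + E * t) - St t x) \<le> fconj (hlS J H) (p, E)"
  proof (rule SUP_least)
    fix x
    have "ereal (inner (p, E) (x, t)) - hlS J H (x, t) \<le> fconj (hlS J H) (p, E)" by (rule fconj_upper)
    then show "ereal (inner p x + E * t) - St t x \<le> fconj (hlS J H) (p, E)"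
      using t by (simp add: hlS_cases inner_Pair)
  qed
  then show ?thesis using SUP_St_dual[OF t] by simp
qed

text \<open>Letting \<open>t \<down> 0\<close> in the slices gives the lower bound \<open>J\<^sup>*(p)\<close> on the dual constraint set.\<close>

lemma fconj_J_le_fconj_hlS:
  assumes "(p, E) \<in> dual_constraint"
  shows "fconj J p \<le> fconj (hlS J H) (p, E)"
proof -
  obtain h where h: "H p = ereal h" "E + h \<le> 0" using assms dual_constraint_iff by blast
  have "ereal (Jstar p) \<le> fconj (hlS J H) (p, E)"
  proof (rule ereal_le_epsilon2)
    fix e :: real assume e: "e > 0"
    define t where "t = e / (\<bar>E + h\<bar> + 1)"
    have t: "t > 0" unfolding t_def using e by simp
    have "t * \<bar>E + h\<bar> \<le> t * (\<bar>E + h\<bar> + 1)" using t by simp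
    also have "\<dots> = e" unfolding t_def by simp
    finally have "Jstar p - e \<le> E * t + Jstar p + t * h"
      using t abs_ge_minus_self[of "E + h"] mult_left_mono[of "- (E + h)" "\<bar>E + h\<bar>" t]
      by (simp add: algebra_simps)
    then have "ereal (Jstar p - e) \<le> ereal (E * t) + (fconj J p + ereal t * H p)" using h by (simp add: fconj_J_real)
    also have "\<dots> \<le> fconj (hlS J H) (p, E)" by (rule slice_le_fconj_hlS[OF t])
    finally show "ereal (Jstar p) \<le> fconj (hlS J H) (p, E) + ereal e"
      by (cases "fconj (hlS J H) (p, E)") auto
  qed
  then show ?thesis by (simp add: fconj_J_real)
qed

lemma fconj_hlS_outside:
  assumes "(p, E) \<notin> dual_constraint"
  shows "fconj (hlS J H) (p, E) = \<infinity>"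
proof (cases "H p = \<infinity>")
  case True
  have "ereal (E * 1) + (fconj J p + ereal 1 * H p) \<le> fconj (hlS J H) (p, E)" by (rule slice_le_fconj_hlS) simp
  then show ?thesis using True by (simp add: fconj_J_real)
next
  case False
  then obtain h where h: "H p = ereal h" using H_not_minf[of p] by (cases "H p") auto
  then have Eh: "E + h > 0" using assms dual_constraint_iff by force
  show ?thesis
  proof (rule ereal_top)
    fix M
    define t where "t = (\<bar>M - Jstar p\<bar> + 1) / (E + h)"
    have t: "t > 0" unfolding t_def using Eh by simp
    have "t * (E + h) = \<bar>M - Jstar p\<bar> + 1" unfolding t_def using Eh by simp
    then have "M \<le> E * t + Jstar p + t * h" by (simp add: algebra_simps)
    then have "ereal M \<le> ereal (E * t) + (fconj J p + ereal t * H p)" using h by (simp add: fconj_J_real)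
    also have "\<dots> \<le> fconj (hlS J H) (p, E)" by (rule slice_le_fconj_hlS[OF t])
    finally show "ereal M \<le> fconj (hlS J H) (p, E)" .
  qed
qed

theorem fconj_hlS: "fconj (hlS J H) (p, E) = fconj J p + ind dual_constraint (p, E)"
proof (rule antisym[OF fconj_hlS_le])
  show "fconj J p + ind dual_constraint (p, E) \<le> fconj (hlS J H) (p, E)"
    using fconj_J_le_fconj_hlS fconj_hlS_outside by (cases "(p, E) \<in> dual_constraint") (auto simp: ind_def)
qed

lemma dual_constraint_le_fconj_fconj_hlS:
  assumes "(p, E) \<in> dual_constraint"
  shows "ereal (inner p x + E * t - Jstar p) \<le> fconj (fconj (hlS J H)) (x, t)"
proof -
  have "ereal (inner (x, t) (p, E)) - fconj (hlS J H) (p, E) \<le> fconj (fconj (hlS J H)) (x, t)"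
    by (rule fconj_upper)
  then show ?thesis using assms by (simp add: fconj_hlS ind_def fconj_J_real inner_Pair inner_commute mult.commute)
qed

lemma fconj_fconj_hlS_neg:
  assumes t: "t < 0"
  shows "fconj (fconj (hlS J H)) (x, t) = \<infinity>"
proof (rule ereal_top)
  fix M
  define a where "a = inner p0 x - h0 * t - Jstar p0"
  define n where "n = (\<bar>M - a\<bar> + 1) / (- t)"
  have n: "n \<ge> 0" "n * (- t) = \<bar>M - a\<bar> + 1" unfolding n_def using t by (simp_all add: divide_nonneg_neg)
  have "(p0, - h0 - n) \<in> dual_constraint" using dual_constraint_iff H_p0 n by simp
  then have "ereal (inner p0 x + (- h0 - n) * t - Jstar p0) \<le> fconj (fconj (hlS J H)) (x, t)"
    by (rule dual_constraint_le_fconj_fconj_hlS)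
  moreover have "M \<le> inner p0 x + (- h0 - n) * t - Jstar p0"
    using n(2) unfolding a_def by (simp add: algebra_simps)
  ultimately show "ereal M \<le> fconj (fconj (hlS J H)) (x, t)" by (meson ereal_less_eq(3) order_trans)
qed

lemma hlS_le_fconj_fconj: "hlS J H (x, t) \<le> fconj (fconj (hlS J H)) (x, t)"
proof -
  have H_dual: "ereal (inner x p) - (fconj J p + ereal t * H p) \<le> fconj (fconj (hlS J H)) (x, t)"
    if "H p = ereal h" for p h
  proof -
    have "(p, - h) \<in> dual_constraint" using dual_constraint_iff that by simp
    from dual_constraint_le_fconj_fconj_hlS[OF this, of x t] show ?thesis
      using that by (simp add: fconj_J_real inner_commute mult.commute diff_diff_eq[symmetric] add.commute)
  qed
  consider "t > 0" | "t = 0" | "t < 0" by linarith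
  then show ?thesis
  proof cases
    case 1
    have "hlS J H (x, t) = fconj (\<lambda>p. fconj J p + ereal t * H p) x" using 1 by (simp add: hlS_cases St_fconj_fconj)
    also have "\<dots> \<le> fconj (fconj (hlS J H)) (x, t)"
    proof (rule fconj_least)
      fix p
      show "ereal (inner x p) - (fconj J p + ereal t * H p) \<le> fconj (fconj (hlS J H)) (x, t)"
        using H_dual[of p] 1 H_not_minf[of p] by (cases "H p") (auto simp: fconj_J_real)
    qed
    finally show ?thesis .
  next
    case 2
    have "hlS J H (x, t) = S0 x" using 2 by (simp add: hlS_cases)
    also have "\<dots> \<le> fconj (fconj (hlS J H)) (x, t)" unfolding S0_def
    proof (rule fconj_least)
      fix p
      show "ereal (inner x p) - (fconj J p + ind domH p) \<le> fconj (fconj (hlS J H)) (x, t)"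
        using H_dual[of p] 2 H_not_minf[of p]
        by (cases "H p") (auto simp: ind_def domH_def edom_def)
    qed
    finally show ?thesis .
  qed (simp add: fconj_fconj_hlS_neg)
qed

lemma fconj_fconj_hlS: "fconj (fconj (hlS J H)) = hlS J H"
proof (rule ext)
  fix z :: "'a \<times> real"
  show "fconj (fconj (hlS J H)) z = hlS J H z"
    using hlS_le_fconj_fconj[of "fst z" "snd z"] fconj_fconj_le[of "hlS J H" z] by simp
qed

lemma econvex_hlS: "econvex (hlS J H)"
  using fconj_econvex[of "fconj (hlS J H)"] fconj_fconj_hlS by simp

lemma elsc_hlS: "elsc (hlS J H)"
  using fconj_elsc[of "fconj (hlS J H)"] fconj_fconj_hlS by simp

lemma S0_le_J: "S0 x \<le> J x"
proof -
  have "S0 x \<le> fconj (fconj J) x" unfolding S0_def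
    by (rule fconj_antimono) (auto simp: ind_def)
  also have "\<dots> \<le> J x" by (rule fconj_fconj_le)
  finally show ?thesis .
qed

lemma fconj_S0: "fconj S0 p = fconj J p + ind (closure domH) p"
  using fconj_infconv_sigmaH S0_infconv by (metis ext)

lemma S0_eq_JS:
  assumes G: "Gamma0 JS" and dom: "edom (fconj JS) = closure (edom H)"
    and eq: "\<forall>p\<in>edom (fconj JS). fconj JS p = fconj J p"
  shows "S0 x = JS x"
proof -
  have c: "fconj JS p = fconj J p + ind (closure domH) p" for p
  proof (cases "p \<in> closure domH")
    case True then show ?thesis using dom eq by (simp add: domH_def ind_def)
  next
    case False
    then have "fconj JS p = \<infinity>" using dom unfolding domH_def edom_def by auto
    then show ?thesis using False by (simp add: ind_def fconj_J_real)
  qed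
  have "JS x = fconj (fconj JS) x" using fenchel_moreau[OF G] by simp
  also have "fconj JS = (\<lambda>p. fconj J p + ind (closure domH) p)" using c by (rule ext)
  finally show ?thesis using S0_closure by simp
qed

lemma S0_eq_J:
  assumes q: "q \<in> subdiff J x" "q \<in> closure domH"
  shows "S0 x = J x"
proof (rule antisym[OF S0_le_J])
  from q(1) have fx: "\<bar>J x\<bar> \<noteq> \<infinity>" and cq: "fconj J q \<le> ereal (inner q x) - J x"
    unfolding subdiff_iff_conj by auto
  then obtain v where v: "J x = ereal v" by (cases "J x") auto
  have "ereal (inner x q) - (fconj J q + ind (closure domH) q) \<le> S0 x"
    unfolding S0_closure by (rule fconj_upper)
  moreover have "J x \<le> ereal (inner x q) - (fconj J q + ind (closure domH) q)"
    using cq q(2) v by (simp add: ind_def fconj_J_real inner_commute)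
  ultimately show "J x \<le> S0 x" by order
qed

lemma S0_subdiff:
  assumes q: "q \<in> subdiff J x" "q \<in> closure domH"
  shows "subdiff S0 x = subdiff J x \<inter> closure domH"
proof -
  have e: "S0 x = J x" by (rule S0_eq_J[OF q])
  have fx: "\<bar>J x\<bar> \<noteq> \<infinity>" using q(1) unfolding subdiff_def by auto
  then obtain v where v: "J x = ereal v" by (cases "J x") auto
  show ?thesis
  proof (intro set_eqI iffI)
    fix r assume "r \<in> subdiff S0 x"
    then have "fconj S0 r \<le> ereal (inner r x) - S0 x" unfolding subdiff_iff_conj by auto
    then have "fconj J r + ind (closure domH) r \<le> ereal (inner r x - v)" using e v fconj_S0 by simp
    then have rc: "r \<in> closure domH" "fconj J r \<le> ereal (inner r x) - J x" using v
      by (auto simp: ind_def fconj_J_real split: if_splits)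
    then have "r \<in> subdiff J x" using fx subdiff_iff_conj[of r J x] by simp
    then show "r \<in> subdiff J x \<inter> closure domH" using rc by blast
  next
    fix r assume r: "r \<in> subdiff J x \<inter> closure domH"
    then have "r \<in> closure domH" by blast
    moreover have "fconj J r \<le> ereal (inner r x) - J x" using r subdiff_iff_conj[of r J x] by simp
    ultimately have "fconj S0 r \<le> ereal (inner r x) - S0 x" using e fconj_S0 by (simp add: ind_def)
    then show "r \<in> subdiff S0 x" using e fx unfolding subdiff_iff_conj by auto
  qed
qed

lemma St_finite_iff: assumes t: "t > 0"
  shows "St t x < \<infinity> \<longleftrightarrow> (\<exists>a b. x = a + t *\<^sub>R b \<and> a \<in> edom J \<and> b \<in> edom (fconj H))"
proof -
  have m: "ereal t * fconj H v < \<infinity> \<longleftrightarrow> fconj H v < \<infinity>" for v using t by (cases "fconj H v") auto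
  have "St t x < \<infinity> \<longleftrightarrow> (\<exists>v. J (x - t *\<^sub>R v) < \<infinity> \<and> fconj H v < \<infinity>)"
    unfolding St_def INF_less_iff ereal_add_less_PInf m by simp
  also have "\<dots> \<longleftrightarrow> (\<exists>a b. x = a + t *\<^sub>R b \<and> a \<in> edom J \<and> b \<in> edom (fconj H))"
  proof
    assume "\<exists>v. J (x - t *\<^sub>R v) < \<infinity> \<and> fconj H v < \<infinity>"
    then obtain v where "J (x - t *\<^sub>R v) < \<infinity>" "fconj H v < \<infinity>" by blast
    then show "\<exists>a b. x = a + t *\<^sub>R b \<and> a \<in> edom J \<and> b \<in> edom (fconj H)"
      unfolding edom_def by (intro exI[of _ "x - t *\<^sub>R v"] exI[of _ v]) simp
  next
    assume "\<exists>a b. x = a + t *\<^sub>R b \<and> a \<in> edom J \<and> b \<in> edom (fconj H)"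
    then obtain a b where "x = a + t *\<^sub>R b" "a \<in> edom J" "b \<in> edom (fconj H)" by blast
    then show "\<exists>v. J (x - t *\<^sub>R v) < \<infinity> \<and> fconj H v < \<infinity>"
      unfolding edom_def by (intro exI[of _ b]) simp
  qed
  finally show ?thesis .
qed

lemma S0_finite_iff: "S0 x < \<infinity> \<longleftrightarrow> (\<exists>a b. x = a + b \<and> a \<in> edom J \<and> b \<in> edom (fconj (ind (edom H))))"
proof -
  have "S0 x < \<infinity> \<longleftrightarrow> (\<exists>w. J (x - w) < \<infinity> \<and> sigmaH w < \<infinity>)"
    unfolding S0_infconv by (rule infconv_dom)
  also have "\<dots> \<longleftrightarrow> (\<exists>a b. x = a + b \<and> a \<in> edom J \<and> b \<in> edom (fconj (ind (edom H))))"
  proof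
    assume "\<exists>w. J (x - w) < \<infinity> \<and> sigmaH w < \<infinity>"
    then obtain w where "J (x - w) < \<infinity>" "sigmaH w < \<infinity>" by blast
    then show "\<exists>a b. x = a + b \<and> a \<in> edom J \<and> b \<in> edom (fconj (ind (edom H)))"
      unfolding edom_def sigmaH_def domH_def by (intro exI[of _ "x - w"] exI[of _ w]) simp
  next
    assume "\<exists>a b. x = a + b \<and> a \<in> edom J \<and> b \<in> edom (fconj (ind (edom H)))"
    then obtain a b where "x = a + b" "a \<in> edom J" "b \<in> edom (fconj (ind (edom H)))" by blast
    then show "\<exists>w. J (x - w) < \<infinity> \<and> sigmaH w < \<infinity>"
      unfolding edom_def sigmaH_def domH_def by (intro exI[of _ b]) simp
  qed
  finally show ?thesis .
qed

theorem edom_hlS: "edom (hlS J H) = (\<Union>t\<in>{0<..}. {a + t *\<^sub>R b | a b. a \<in> edom J \<and> b \<in> edom (fconj H)} \<times> {t})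
              \<union> ({a + b | a b. a \<in> edom J \<and> b \<in> edom (fconj (ind (edom H)))} \<times> {0})"
proof (intro set_eqI)
  fix z :: "'a \<times> real"
  obtain x t where z: "z = (x, t)" by fastforce
  show "z \<in> edom (hlS J H) \<longleftrightarrow> z \<in> (\<Union>t\<in>{0<..}. {a + t *\<^sub>R b | a b. a \<in> edom J \<and> b \<in> edom (fconj H)} \<times> {t})
              \<union> ({a + b | a b. a \<in> edom J \<and> b \<in> edom (fconj (ind (edom H)))} \<times> {0})"
  proof (cases "t > 0")
    case True
    then show ?thesis unfolding z edom_def[of "hlS J H"] using St_finite_iff[OF True, of x] by (auto simp: hlS_cases)
  next
    case False
    show ?thesis
    proof (cases "t = 0")
      case True then show ?thesis unfolding z edom_def[of "hlS J H"] using S0_finite_iff[of x] by (auto simp: hlS_cases)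
    next
      case False2: False
      then show ?thesis unfolding z edom_def[of "hlS J H"] using False by (auto simp: hlS_cases)
    qed
  qed
qed

definition domHstar :: "'a set" where "domHstar = edom (fconj H)"

lemma convex_domHstar: "convex domHstar"
  unfolding domHstar_def by (rule convex_edom) (use Gamma0_fconj_H fconj_H_not_minf in \<open>auto simp: Gamma0_def\<close>)

lemma convex_domJ: "convex (edom J)"
  by (rule convex_edom) (use GJ J_not_minf in \<open>auto simp: Gamma0_def\<close>)

lemma interior_domH_nonempty: "interior (edom H) \<noteq> {}" using LH unfolding legendre_def by blast

lemma H_strictly_convex:
  assumes "x \<in> interior (edom H)" "y \<in> interior (edom H)" "x \<noteq> y" "0 < u" "u < 1"
  shows "H ((1 - u) *\<^sub>R x + u *\<^sub>R y) < ereal (1 - u) * H x + ereal u * H y"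
  using LH assms unfolding legendre_def by blast

lemma H_translate_normal:
  assumes ab: "domHstar \<subseteq> {x. a \<bullet> x = b}"
  shows "H (p + s *\<^sub>R a) = ereal (s * b) + H p"
proof -
  have "H (p + s *\<^sub>R a) = fconj (fconj H) (p + s *\<^sub>R a)" using fconj_fconj_H by simp
  also have "\<dots> = (SUP v. ereal (s * b) + (ereal (inner v p) - fconj H v))"
    unfolding fconj_def[of "fconj H"]
  proof (intro SUP_cong refl)
    fix v
    show "ereal (inner (p + s *\<^sub>R a) v) - fconj H v = ereal (s * b) + (ereal (inner v p) - fconj H v)"
    proof (cases "v \<in> domHstar")
      case True
      then have "a \<bullet> v = b" using ab by auto
      moreover obtain r where "fconj H v = ereal r" using True fconj_H_not_minf[of v] unfolding domHstar_def edom_def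
        by (cases "fconj H v") auto
      ultimately show ?thesis by (simp add: inner_add_left inner_commute algebra_simps)
    next
      case False
      then have "fconj H v = \<infinity>" unfolding domHstar_def edom_def by simp
      then show ?thesis by simp
    qed
  qed
  also have "\<dots> = ereal (s * b) + fconj (fconj H) p"
    unfolding fconj_def[of "fconj H"]
    using SUP_ereal_add_right[of UNIV "ereal (s * b)" "\<lambda>v. ereal (inner v p) - fconj H v"] by (simp add: inner_commute)
  finally show ?thesis using fconj_fconj_H by simp
qed

text \<open>If \<open>dom H\<^sup>*\<close> had empty interior it would lie in a hyperplane \<open>a \<bullet> v = b\<close>, making \<open>H\<close> affine
  along \<open>a\<close>, against strict convexity on the open set \<open>int dom H\<close>.\<close>

lemma interior_domHstar_nonempty: "interior domHstar \<noteq> {}"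
proof
  assume e: "interior domHstar = {}"
  obtain a b where ab: "a \<noteq> 0" "domHstar \<subseteq> {x. a \<bullet> x = b}"
    using empty_interior_subset_hyperplane[OF convex_domHstar e] by blast
  note shift = H_translate_normal[OF ab(2)]
  obtain p where p: "p \<in> interior (edom H)" using interior_domH_nonempty by blast
  then obtain e where e: "e > 0" "ball p e \<subseteq> interior (edom H)"
    using open_interior open_contains_ball by blast
  define s where "s = e / (2 * norm a)"
  have s: "s > 0" "norm (s *\<^sub>R a) < e" using ab e unfolding s_def by auto
  have i1: "p + s *\<^sub>R a \<in> interior (edom H)" using e s by (intro subsetD[OF e(2)]) (simp add: dist_norm)
  have i2: "p + (-s) *\<^sub>R a \<in> interior (edom H)" using e s by (intro subsetD[OF e(2)]) (simp add: dist_norm)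
  have ne: "p + (-s) *\<^sub>R a \<noteq> p + s *\<^sub>R a"
  proof
    assume "p + (-s) *\<^sub>R a = p + s *\<^sub>R a"
    then have "(-s) *\<^sub>R a - s *\<^sub>R a = 0" by simp
    then have "((-s) - s) *\<^sub>R a = 0" by (simp only: scaleR_left_diff_distrib)
    then show False using s ab by simp
  qed
  have "H ((1 - 1/2) *\<^sub>R (p + (-s) *\<^sub>R a) + (1/2) *\<^sub>R (p + s *\<^sub>R a))
      < ereal (1 - 1/2) * H (p + (-s) *\<^sub>R a) + ereal (1/2) * H (p + s *\<^sub>R a)"
    by (rule H_strictly_convex[OF i2 i1 ne]) auto
  moreover have "(1 - 1/2) *\<^sub>R (p + (-s) *\<^sub>R a) + (1/2) *\<^sub>R (p + s *\<^sub>R a) = p"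
    by (simp add: algebra_simps scaleR_add_left[symmetric])
  moreover obtain hp where hp: "H p = ereal hp" using p interior_subset[of "edom H"] H_not_minf[of p]
    unfolding edom_def by (cases "H p") auto
  ultimately have "hp < (hp - b * s) / 2 + (hp + b * s) / 2" using shift[of p s] shift[of p "-s"] by (simp add: algebra_simps)
  moreover have "(hp - b * s) / 2 + (hp + b * s) / 2 = hp" by (simp add: field_simps)
  ultimately show False by simp
qed
lemma interior_edom_hlS_pos:
  assumes "(x, t) \<in> interior (edom (hlS J H))"
  shows "t > 0"
proof -
  obtain e where e: "e > 0" "ball (x, t) e \<subseteq> edom (hlS J H)"
    using assms open_interior[of "edom (hlS J H)"] interior_subset unfolding open_contains_ball by blast
  have "(x, t - e/2) \<in> ball (x, t) e" using e(1) by (simp add: dist_Pair_Pair dist_real_def)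
  then have "hlS J H (x, t - e/2) < \<infinity>" using e(2) unfolding edom_def by blast
  then have "t - e/2 \<ge> 0" by (simp add: hlS_cases split: if_splits)
  then show ?thesis using e(1) by simp
qed

text \<open>Pushing \<open>x\<close> slightly away from \<open>a\<^sub>0 + t b\<^sub>0\<close> with \<open>b\<^sub>0 \<in> int dom H\<^sup>*\<close> and decomposing the
  pushed point exhibits \<open>x\<close> as a convex combination whose \<open>H\<^sup>*\<close>-part lies on an open segment
  ending at \<open>b\<^sub>0\<close>.\<close>

lemma interior_edom_hlS_decompose:
  assumes xt: "(x, t) \<in> interior (edom (hlS J H))"
  obtains a b where "x = a + t *\<^sub>R b" "a \<in> edom J" "b \<in> interior domHstar"
proof -
  have tpos: "t > 0" by (rule interior_edom_hlS_pos[OF xt])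
  obtain e where e: "e > 0" "ball (x, t) e \<subseteq> edom (hlS J H)"
    using xt open_interior[of "edom (hlS J H)"] interior_subset unfolding open_contains_ball by blast
  obtain b0 where b0: "b0 \<in> interior domHstar" using interior_domHstar_nonempty by blast
  obtain a0 where a0: "a0 \<in> edom J" using Gamma0_ex_finite[OF GJ] unfolding edom_def by blast
  define d where "d = x - a0 - t *\<^sub>R b0"
  define \<delta> where "\<delta> = e / (2 * (norm d + 1))"
  have "norm d + 1 > 0" by (simp add: add_nonneg_pos)
  then have np: "2 * (norm d + 1) > 0" by simp
  then have dpos: "\<delta> > 0" unfolding \<delta>_def using e by (intro divide_pos_pos)
  have "norm (\<delta> *\<^sub>R d) = \<delta> * norm d" using dpos by simp
  also have "\<dots> < \<delta> * (2 * (norm d + 1))" using dpos by (intro mult_strict_left_mono) (auto simp: add_nonneg_pos)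
  also have "\<dots> = e" unfolding \<delta>_def using np by simp
  finally have "(x + \<delta> *\<^sub>R d, t) \<in> ball (x, t) e" by (simp add: dist_Pair_Pair dist_norm)
  then have "St t (x + \<delta> *\<^sub>R d) < \<infinity>" using e(2) tpos unfolding edom_def by (auto simp: hlS_cases)
  then obtain a1 b1 where ab1: "x + \<delta> *\<^sub>R d = a1 + t *\<^sub>R b1" "a1 \<in> edom J" "b1 \<in> domHstar"
    using St_finite_iff[OF tpos] unfolding domHstar_def by blast
  define u where "u = \<delta> / (1 + \<delta>)"
  have u: "0 < u" "u < 1" "1 - u = 1 / (1 + \<delta>)" using dpos unfolding u_def by (auto simp: field_simps)
  have "x = (1 / (1 + \<delta>)) *\<^sub>R ((1 + \<delta>) *\<^sub>R x)" using dpos by simp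
  also have "(1 + \<delta>) *\<^sub>R x = a1 + t *\<^sub>R b1 + \<delta> *\<^sub>R (a0 + t *\<^sub>R b0)"
    using ab1(1) unfolding d_def by (simp add: algebra_simps)
  finally have x: "x = ((1 - u) *\<^sub>R a1 + u *\<^sub>R a0) + t *\<^sub>R ((1 - u) *\<^sub>R b1 + u *\<^sub>R b0)"
    unfolding u(3) unfolding u_def by (simp add: scaleR_add_right scaleR_scaleR algebra_simps)
  have "(1 - u) *\<^sub>R a1 + u *\<^sub>R a0 \<in> edom J"
    using convex_domJ ab1(2) a0 u(1,2) unfolding convex_alt by auto
  moreover have "(1 - u) *\<^sub>R b1 + u *\<^sub>R b0 \<in> interior domHstar"
  proof (cases "b1 = b0")
    case True then show ?thesis using b0 by (simp add: algebra_simps)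
  next
    case False
    have "(1 - u) *\<^sub>R b1 + u *\<^sub>R b0 \<in> open_segment b0 b1"
      unfolding in_segment using False u by (intro conjI exI[of _ "1 - u"]) (auto simp: algebra_simps)
    moreover have "open_segment b0 b1 \<subseteq> interior domHstar"
      using in_interior_closure_convex_segment[OF convex_domHstar b0] ab1(3) closure_subset by blast
    ultimately show ?thesis by blast
  qed
  ultimately show ?thesis using that x by blast
qed

lemma slice_in_interior_edom_hlS:
  assumes t: "t > 0" and a: "a \<in> edom J" and b: "b \<in> interior domHstar"
  shows "(a + t *\<^sub>R b, t) \<in> interior (edom (hlS J H))"
proof -
  let ?z = "(a + t *\<^sub>R b, t)"
  obtain r where r: "r > 0" "ball b r \<subseteq> domHstar"
    using b open_interior[of domHstar] interior_subset unfolding open_contains_ball by blast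
  have tf: "(fst \<longlongrightarrow> a + t *\<^sub>R b) (nhds ?z)" and ts: "(snd \<longlongrightarrow> t) (nhds ?z)"
    using tendsto_fst[OF filterlim_ident, of ?z] tendsto_snd[OF filterlim_ident, of ?z] by simp_all
  have "((\<lambda>y. (1 / snd y) *\<^sub>R (fst y - a)) \<longlongrightarrow> (1 / t) *\<^sub>R ((a + t *\<^sub>R b) - a)) (nhds ?z)"
    using t by (intro tendsto_intros tf ts) auto
  then have "((\<lambda>y. (1 / snd y) *\<^sub>R (fst y - a)) \<longlongrightarrow> b) (nhds ?z)" using t by simp
  then have "\<forall>\<^sub>F y in nhds ?z. (1 / snd y) *\<^sub>R (fst y - a) \<in> ball b r"
    by (rule topological_tendstoD) (use r(1) in simp_all)
  moreover have "\<forall>\<^sub>F y in nhds ?z. snd y > 0" using ts t by (rule order_tendstoD)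
  ultimately have "\<forall>\<^sub>F y in nhds ?z. y \<in> edom (hlS J H)"
  proof eventually_elim
    case (elim y)
    obtain x' t' where y: "y = (x', t')" by fastforce
    have t': "t' > 0" using elim y by simp
    define b' where "b' = (1 / t') *\<^sub>R (x' - a)"
    have "b' \<in> domHstar" using elim r(2) y unfolding b'_def by auto
    moreover have "x' = a + t' *\<^sub>R b'" unfolding b'_def using t' by simp
    ultimately have "St t' x' < \<infinity>" using St_finite_iff[OF t'] a unfolding domHstar_def by blast
    then show ?case using y t' unfolding edom_def by (simp add: hlS_cases)
  qed
  then show ?thesis by (rule interiorI_eventually)
qed

theorem interior_edom_hlS: "interior (edom (hlS J H)) =
       (\<Union>t\<in>{0<..}. {a + t *\<^sub>R b | a b. a \<in> edom J \<and> b \<in> interior (edom (fconj H))} \<times> {t})"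
proof (intro set_eqI iffI)
  fix z assume z: "z \<in> interior (edom (hlS J H))"
  obtain x t where zx: "z = (x, t)" by fastforce
  obtain a b where "x = a + t *\<^sub>R b" "a \<in> edom J" "b \<in> interior domHstar"
    using interior_edom_hlS_decompose z zx by blast
  then show "z \<in> (\<Union>t\<in>{0<..}. {a + t *\<^sub>R b | a b. a \<in> edom J \<and> b \<in> interior (edom (fconj H))} \<times> {t})"
    using interior_edom_hlS_pos z zx unfolding domHstar_def by blast
qed (use slice_in_interior_edom_hlS in \<open>auto simp: domHstar_def\<close>)

end

context hopf_lax
begin

definition Hr :: "'a \<Rightarrow> real" where "Hr q = real_of_ereal (H q)"

lemma H_eq_Hr: "q \<in> domH \<Longrightarrow> H q = ereal (Hr q)"
  unfolding Hr_def domH_def edom_def using H_not_minf[of q] by (cases "H q") auto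

lemma H_outside_domH: "q \<notin> domH \<Longrightarrow> H q = \<infinity>"
  unfolding domH_def edom_def by simp

definition dual_affine :: "'a \<Rightarrow> 'a \<times> real \<Rightarrow> real" where "dual_affine q z = inner q (fst z) - snd z * Hr q - Jstar q"

lemma dual_affine_le_hlS: assumes "q \<in> domH" shows "ereal (dual_affine q z) \<le> hlS J H z"
proof -
  have kk: "(q, - Hr q) \<in> dual_constraint" using dual_constraint_iff H_eq_Hr[OF assms] by simp
  obtain y s where z: "z = (y, s)" by fastforce
  have "ereal (inner z (q, - Hr q)) - fconj (hlS J H) (q, - Hr q) \<le> fconj (fconj (hlS J H)) z"
    by (rule fconj_upper)
  moreover have "ereal (inner z (q, - Hr q)) - fconj (hlS J H) (q, - Hr q) = ereal (dual_affine q z)"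
    using kk by (simp add: fconj_hlS ind_def fconj_J_real dual_affine_def z inner_Pair inner_commute mult.commute)
  ultimately show ?thesis using fconj_fconj_hlS by simp
qed

lemma hlS_not_minf: "hlS J H z \<noteq> -\<infinity>"
  using dual_affine_le_hlS[OF p0_domH, of z] by auto

lemma hlS_SUP_dual_affine: assumes t: "t > 0" shows "hlS J H (y, t) = (SUP q\<in>domH. ereal (dual_affine q (y, t)))"
proof -
  have "hlS J H (y, t) = fconj (\<lambda>p. fconj J p + ereal t * H p) y" using t by (simp add: hlS_cases St_fconj_fconj)
  also have "\<dots> = (SUP q. (if q \<in> domH then ereal (dual_affine q (y, t)) else -\<infinity>))"
    unfolding fconj_def[of "\<lambda>p. fconj J p + ereal t * H p"]
  proof (rule SUP_cong[OF refl])
    fix q :: 'a assume "q \<in> UNIV"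
    show "ereal (inner y q) - (fconj J q + ereal t * H q) = (if q \<in> domH then ereal (dual_affine q (y, t)) else -\<infinity>)"
    proof (cases "q \<in> domH")
      case True then show ?thesis using H_eq_Hr[OF True] by (simp add: fconj_J_real dual_affine_def inner_commute)
    next
      case False then show ?thesis using H_outside_domH[OF False] t by (simp add: fconj_J_real)
    qed
  qed
  also have "\<dots> = (SUP q\<in>domH. ereal (dual_affine q (y, t)))"
  proof (rule antisym)
    show "(SUP q. (if q \<in> domH then ereal (dual_affine q (y, t)) else -\<infinity>)) \<le> (SUP q\<in>domH. ereal (dual_affine q (y, t)))"
    proof (rule SUP_least)
      fix q :: 'a assume "q \<in> UNIV"
      show "(if q \<in> domH then ereal (dual_affine q (y, t)) else -\<infinity>) \<le> (SUP q\<in>domH. ereal (dual_affine q (y, t)))"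
        by (cases "q \<in> domH") (auto intro: SUP_upper)
    qed
    show "(SUP q\<in>domH. ereal (dual_affine q (y, t))) \<le> (SUP q. (if q \<in> domH then ereal (dual_affine q (y, t)) else -\<infinity>))"
    proof (rule SUP_least)
      fix q assume q: "q \<in> domH"
      show "ereal (dual_affine q (y, t)) \<le> (SUP q. (if q \<in> domH then ereal (dual_affine q (y, t)) else -\<infinity>))"
        by (rule SUP_upper2[of q]) (use q in auto)
    qed
  qed
  finally show ?thesis .
qed

lemma objective_eq: "ereal (inner q x) - ereal t * H q - fconj J q = (if q \<in> domH then ereal (dual_affine q (x, t)) else -\<infinity>)"
  if "t > 0"
  using that H_eq_Hr[of q] H_outside_domH[of q] by (auto simp: dual_affine_def fconj_J_real)

definition is_maximizer :: "'a \<times> real \<Rightarrow> 'a \<Rightarrow> bool" where "is_maximizer z q \<longleftrightarrow> q \<in> domH \<and> (\<forall>q'\<in>domH. dual_affine q' z \<le> dual_affine q z)"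

lemma objective_max_iff:
  assumes t: "t > 0"
  shows "(\<forall>q. ereal (inner q x) - ereal t * H q - fconj J q \<le> ereal (inner p x) - ereal t * H p - fconj J p)
     \<longleftrightarrow> is_maximizer (x, t) p"
  unfolding objective_eq[OF t] is_maximizer_def using p0_domH by (auto split: if_splits)

lemma hlS_is_maximizer: assumes t: "snd z > 0" and m: "is_maximizer z q" shows "hlS J H z = ereal (dual_affine q z)"
proof (rule antisym)
  obtain y s where z: "z = (y, s)" by fastforce
  show "hlS J H z \<le> ereal (dual_affine q z)" using hlS_SUP_dual_affine[of s y] t m unfolding z is_maximizer_def
    by (auto intro!: SUP_least)
  show "ereal (dual_affine q z) \<le> hlS J H z" using dual_affine_le_hlS m unfolding is_maximizer_def by blast
qed

lemma convex_on_Jstar: "convex_on UNIV Jstar"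
  unfolding Jstar_def by (rule econvex_finite_convex_on[OF fconj_econvex convex_UNIV coercive1_fconj_finite[OF GJ CJ]])

lemma is_maximizer_interior:
  assumes t: "t > 0" and m: "is_maximizer (x, t) q"
  shows "q \<in> interior (edom H)"
proof -
  have qC: "q \<in> domH" using m unfolding is_maximizer_def by blast
  define \<phi> where "\<phi> y = Jstar y / t + inner y (- (1 / t) *\<^sub>R x)" for y
  have "convex_on UNIV \<phi>"
    unfolding \<phi>_def using t by (intro convex_on_add convex_on_cdiv convex_on_Jstar convex_on_inner_left) auto
  moreover have "ereal (Hr q + \<phi> q) \<le> H y + ereal (\<phi> y)" for y
  proof (cases "y \<in> domH")
    case True
    have "dual_affine y (x, t) \<le> dual_affine q (x, t)" using m True unfolding is_maximizer_def by blast
    then have "(t * Hr q + Jstar q - inner q x) / t \<le> (t * Hr y + Jstar y - inner y x) / t"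
      using t unfolding dual_affine_def by (intro divide_right_mono) auto
    then show ?thesis using t H_eq_Hr[OF True] unfolding \<phi>_def by (simp add: field_simps)
  qed (simp add: H_outside_domH)
  moreover have "econvex H" using GH by (simp add: Gamma0_def)
  ultimately have "subdiff H q \<noteq> {}"
    using subdiff_nonempty_if_min_add_convex[of H, OF _ H_not_minf H_eq_Hr[OF qC]] by blast
  then show ?thesis using qC LH unfolding legendre_def domH_def by blast
qed

lemma is_maximizer_unique:
  assumes t: "t > 0" and m1: "is_maximizer (x, t) q1" and m2: "is_maximizer (x, t) q2"
  shows "q1 = q2"
proof (rule ccontr)
  assume ne: "q1 \<noteq> q2"
  have i1: "q1 \<in> interior (edom H)" by (rule is_maximizer_interior[OF t m1])
  have i2: "q2 \<in> interior (edom H)" by (rule is_maximizer_interior[OF t m2])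
  define m where "m = (1 - 1/2) *\<^sub>R q1 + (1/2) *\<^sub>R q2"
  have cv: "convex (interior (edom H))" using convex_interior[OF convex_domH[unfolded domH_def]] .
  have hh: "0 \<le> (1/2::real) \<and> (1/2::real) \<le> 1" by simp
  have mi: "m \<in> interior (edom H)" unfolding m_def
    by (rule cv[unfolded convex_alt, rule_format, OF i1 i2 hh])
  then have mC: "m \<in> domH" using interior_subset unfolding domH_def by blast
  have q1C: "q1 \<in> domH" and q2C: "q2 \<in> domH" using m1 m2 unfolding is_maximizer_def by auto
  have "H m < ereal (1 - 1/2) * H q1 + ereal (1/2) * H q2" unfolding m_def by (rule H_strictly_convex[OF i1 i2 ne]) auto
  then have hs: "Hr m < (1 - 1/2) * Hr q1 + (1/2) * Hr q2" using H_eq_Hr[OF mC] H_eq_Hr[OF q1C] H_eq_Hr[OF q2C] by simp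
  have Jstar: "Jstar m \<le> (1 - 1/2) * Jstar q1 + (1/2) * Jstar q2" unfolding m_def
    by (rule convex_onD[OF convex_on_Jstar]) auto
  have eq: "dual_affine q1 (x, t) = dual_affine q2 (x, t)" using m1 m2 q1C q2C unfolding is_maximizer_def by (meson antisym)
  define P where "P = t * ((1 - 1/2) * Hr q1 + (1/2) * Hr q2 - Hr m)"
  define Q where "Q = (1 - 1/2) * Jstar q1 + (1/2) * Jstar q2 - Jstar m"
  have "dual_affine m (x, t) = (1 - 1/2) * dual_affine q1 (x, t) + (1/2) * dual_affine q2 (x, t) + P + Q"
    unfolding dual_affine_def m_def P_def Q_def by (simp add: inner_add_left algebra_simps)
  moreover have "(1 - 1/2) * dual_affine q1 (x, t) + (1/2) * dual_affine q2 (x, t) = dual_affine q1 (x, t)" using eq by simp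
  moreover have "P > 0" unfolding P_def using hs t by simp
  moreover have "Q \<ge> 0" unfolding Q_def using Jstar by simp
  ultimately have "dual_affine m (x, t) > dual_affine q1 (x, t)" by linarith
  then show False using m1 mC unfolding is_maximizer_def by fastforce
qed

end

text \<open>The data at a point of \<open>int dom S\<close> provided by \<open>econvex_local_bound\<close>: an upper
  bound \<open>Mb\<close> of \<open>S\<close> on a closed ball of radius \<open>dl\<close>, and continuity of \<open>S\<close> at the centre.\<close>

locale hopf_lax_interior_point = hopf_lax J H for J H :: "'a::euclidean_space \<Rightarrow> ereal" +
  fixes x0 t0 dl Mb
  assumes int0: "(x0, t0) \<in> interior (edom (hlS J H))"
    and dl: "dl > 0"
    and bnd: "\<And>y. y \<in> cball (x0, t0) dl \<Longrightarrow> hlS J H y \<le> ereal Mb"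
    and Scont: "isCont (rfun (hlS J H)) (x0, t0)"
begin

lemma t0_pos: "t0 > 0" using int0 interior_edom_hlS by auto

definition r0 :: "real" where "r0 = min (dl/2) (t0/2)"

lemma r0_pos: "r0 > 0" unfolding r0_def using dl t0_pos by simp

lemma ball_r0_snd_pos: assumes "y \<in> ball (x0, t0) r0" shows "snd y > 0"
proof -
  obtain y1 s where y: "y = (y1, s)" by fastforce
  have "dist t0 s < r0" using assms y dist_snd_le[of "(x0, t0)" y] by (simp add: dist_commute)
  then have "\<bar>t0 - s\<bar> < t0/2" unfolding r0_def dist_real_def by simp
  moreover have "t0 - s \<le> \<bar>t0 - s\<bar>" by simp
  ultimately show ?thesis using y t0_pos by simp
qed

lemma ball_r0_subset_cball: "y \<in> ball (x0, t0) r0 \<Longrightarrow> y \<in> cball (x0, t0) dl"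
  unfolding r0_def using dl by auto

lemma hlS_eq_rfun_ball_r0: assumes "y \<in> ball (x0, t0) r0" shows "hlS J H y = ereal (rfun (hlS J H) y)"
proof -
  have "hlS J H y \<le> ereal Mb" using bnd[OF ball_r0_subset_cball[OF assms]] .
  then show ?thesis using hlS_not_minf[of y] unfolding rfun_def by (cases "hlS J H y") auto
qed

text \<open>Evaluating the affine minorant of \<open>S\<close> at \<open>y\<close> shifted by \<open>dl/2\<close> in the direction \<open>q\<close> stays
  inside the ball where \<open>S \<le> Mb\<close>.\<close>

lemma dual_affine_bound:
  assumes y: "y \<in> ball (x0, t0) r0" and q: "q \<in> domH"
  shows "dual_affine q y \<le> Mb - (dl/2) * norm q"
proof (cases "q = 0")
  case True
  have "ereal (dual_affine q y) \<le> ereal Mb" using dual_affine_le_hlS[OF q, of y] bnd[OF ball_r0_subset_cball[OF y]] by order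
  then show ?thesis using True by simp
next
  case False
  obtain y1 s where ys: "y = (y1, s)" by fastforce
  define w where "w = (y1 + (dl / (2 * norm q)) *\<^sub>R q, s)"
  have "dist w y = dl / 2" unfolding w_def ys using False dl by (simp add: dist_Pair_Pair dist_norm)
  moreover have "dist y (x0, t0) < dl / 2" using y unfolding r0_def by (simp add: dist_commute)
  ultimately have "dist w (x0, t0) \<le> dl" using dist_triangle[of w "(x0, t0)" y] by linarith
  then have "w \<in> cball (x0, t0) dl" by (simp add: dist_commute)
  then have "ereal (dual_affine q w) \<le> ereal Mb" using dual_affine_le_hlS[OF q, of w] bnd by (meson order_trans)
  moreover have "dual_affine q w = dual_affine q y + (dl/2) * norm q"
  proof -
    have "inner q ((dl / (2 * norm q)) *\<^sub>R q) = (dl/2) * norm q"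
      using False by (simp add: power2_norm_eq_inner[symmetric] power2_eq_square)
    then show ?thesis unfolding dual_affine_def w_def ys by (simp add: inner_add_right)
  qed
  ultimately show ?thesis by simp
qed

text \<open>Almost-maximizers are bounded by \<open>dual_affine_bound\<close>, and \<open>-dual_affine\<close> extended by \<open>\<infinity>\<close>
  off \<open>dom H\<close> is lower semicontinuous, hence attains its minimum on a ball.\<close>

lemma is_maximizer_exists:
  assumes y: "y \<in> ball (x0, t0) r0"
  obtains q where "is_maximizer y q"
proof -
  obtain y1 s where ys: "y = (y1, s)" by fastforce
  have s: "s > 0" using ball_r0_snd_pos[OF y] ys by simp
  define m where "m = rfun (hlS J H) y"
  have Sm: "(SUP q\<in>domH. ereal (dual_affine q y)) = ereal m"
    using hlS_SUP_dual_affine[OF s, of y1] hlS_eq_rfun_ball_r0[OF y] unfolding m_def ys by simp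
  have "ereal (m - 1) < (SUP q\<in>domH. ereal (dual_affine q y))" using Sm by simp
  then obtain q1 where q1: "q1 \<in> domH" "m - 1 < dual_affine q1 y" by (auto simp: less_SUP_iff)
  define R where "R = 2 * (Mb - m + 1) / dl"
  have small: "norm q < R" if "q \<in> domH" "m - 1 < dual_affine q y" for q
  proof -
    have "(dl/2) * norm q < Mb - m + 1" using dual_affine_bound[OF y that(1)] that(2) by linarith
    then show ?thesis unfolding R_def using dl by (simp add: field_simps)
  qed
  define \<psi> where "\<psi> q = ereal s * H q + ereal (Jstar q - inner q y1)" for q
  have psi_C: "\<psi> q = ereal (- dual_affine q y)" if "q \<in> domH" for q
    using H_eq_Hr[OF that] unfolding \<psi>_def dual_affine_def ys by simp
  have psi_nC: "\<psi> q = \<infinity>" if "q \<notin> domH" for q using H_outside_domH[OF that] s unfolding \<psi>_def by simp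
  have lpsi: "elsc \<psi>" unfolding \<psi>_def
  proof (rule elsc_add)
    show "elsc (\<lambda>q. ereal s * H q)" using GH s unfolding Gamma0_def by (intro elsc_scale_pos) auto
    show "elsc (\<lambda>q. ereal (Jstar q - inner q y1))"
      by (rule elsc_continuous) (intro continuous_intros Jstar_continuous)
    show "ereal s * H q \<noteq> -\<infinity>" for q using H_not_minf[of q] s by (cases "H q") auto
  qed simp
  have K: "compact (cball (0::'a) R)" "q1 \<in> cball 0 R" using small[OF q1] by (auto simp: dist_norm)
  obtain qs where qs: "qs \<in> cball 0 R" "\<And>q. q \<in> cball 0 R \<Longrightarrow> \<psi> qs \<le> \<psi> q"
    using elsc_attains_min[OF lpsi K(1)] K(2) by blast
  have "\<psi> qs \<le> \<psi> q1" using qs K(2) by blast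
  then have qsC: "qs \<in> domH" using psi_C[OF q1(1)] psi_nC by force
  have "is_maximizer y qs" unfolding is_maximizer_def
  proof (intro conjI ballI qsC)
    fix q' assume q': "q' \<in> domH"
    have a1: "dual_affine q1 y \<le> dual_affine qs y" using qs(2)[OF K(2)] psi_C[OF q1(1)] psi_C[OF qsC] by simp
    show "dual_affine q' y \<le> dual_affine qs y"
    proof (cases "q' \<in> cball 0 R")
      case True then show ?thesis using qs(2)[OF True] psi_C[OF q'] psi_C[OF qsC] by simp
    next
      case False
      then have "\<not> (m - 1 < dual_affine q' y)" using small[OF q'] by (auto simp: dist_norm)
      then show ?thesis using q1(2) a1 by linarith
    qed
  qed
  then show ?thesis using that by blast
qed

lemma dual_affine_diff: "dual_affine q y - dual_affine q z = inner (q, - Hr q) (y - z)"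
  by (cases y; cases z) (simp add: dual_affine_def inner_Pair inner_diff_right algebra_simps)

definition pbar :: "'a" where "pbar = (SOME q. is_maximizer (x0, t0) q)"

lemma center_in_ball_r0: "(x0, t0) \<in> ball (x0, t0) r0" using r0_pos by simp

lemma pbar_is_maximizer: "is_maximizer (x0, t0) pbar"
proof -
  obtain q where "is_maximizer (x0, t0) q" using is_maximizer_exists[OF center_in_ball_r0] by blast
  then show ?thesis unfolding pbar_def by (rule someI)
qed

lemma is_maximizer_pbar: "is_maximizer (x0, t0) q \<Longrightarrow> q = pbar"
  using is_maximizer_unique[OF t0_pos _ pbar_is_maximizer] by blast

definition LB :: "real" where "LB = dual_affine p0 (x0, t0) - (norm p0 + \<bar>Hr p0\<bar>) * r0"

lemma LB_le_dual_affine_p0: assumes y: "y \<in> ball (x0, t0) r0" shows "LB \<le> dual_affine p0 y"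
proof -
  have "\<bar>dual_affine p0 y - dual_affine p0 (x0, t0)\<bar> \<le> (norm p0 + \<bar>Hr p0\<bar>) * norm (y - (x0, t0))"
    unfolding dual_affine_diff using inner_pair_bound[of p0 "- Hr p0"] by simp
  also have "\<dots> \<le> (norm p0 + \<bar>Hr p0\<bar>) * r0"
    using y by (intro mult_left_mono) (auto simp: dist_norm norm_minus_commute)
  finally show ?thesis unfolding LB_def by linarith
qed

definition RB :: "real" where "RB = 2 * (Mb - LB) / dl"

lemma is_maximizer_norm_bound: assumes y: "y \<in> ball (x0, t0) r0" and m: "is_maximizer y q" shows "norm q \<le> RB"
proof -
  have "dual_affine p0 y \<le> dual_affine q y" using m p0_domH unfolding is_maximizer_def by blast
  moreover have "q \<in> domH" using m unfolding is_maximizer_def by blast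
  from dual_affine_bound[OF y this] have "dual_affine q y \<le> Mb - (dl/2) * norm q" .
  ultimately have "(dl/2) * norm q \<le> Mb - LB" using LB_le_dual_affine_p0[OF y] by linarith
  then show ?thesis unfolding RB_def using dl by (simp add: field_simps)
qed

text \<open>Solving \<open>S(W n) = dual_affine (P n) (W n)\<close> for \<open>H (P n)\<close> shows that these values converge;
  lower semicontinuity of \<open>H\<close> then makes the limit a maximizer at \<open>(x\<^sub>0, t\<^sub>0)\<close>, hence \<open>pbar\<close>.\<close>

lemma is_maximizer_limit:
  assumes Wb: "\<And>n. W n \<in> ball (x0, t0) r0" and Wlim: "W \<longlonglongrightarrow> (x0, t0)"
    and Pm: "\<And>n. is_maximizer (W n) (P n)" and Plim: "P \<longlonglongrightarrow> l"
  shows "l = pbar" "(\<lambda>n. Hr (P n)) \<longlonglongrightarrow> Hr pbar"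
proof -
  have PC: "P n \<in> domH" for n using Pm unfolding is_maximizer_def by blast
  define s0 where "s0 = rfun (hlS J H) (x0, t0)"
  have Slim: "(\<lambda>n. rfun (hlS J H) (W n)) \<longlonglongrightarrow> s0"
    unfolding s0_def by (rule isCont_tendsto_compose[OF Scont Wlim])
  have Weq: "rfun (hlS J H) (W n) = dual_affine (P n) (W n)" for n
    using hlS_is_maximizer[OF ball_r0_snd_pos[OF Wb] Pm] hlS_eq_rfun_ball_r0[OF Wb] by simp
  have Wpos: "snd (W n) > 0" for n using ball_r0_snd_pos[OF Wb] .
  have Hform: "Hr (P n) = (inner (P n) (fst (W n)) - Jstar (P n) - rfun (hlS J H) (W n)) / snd (W n)" for n
    using Weq[of n] Wpos[of n] unfolding dual_affine_def by (simp add: field_simps)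
  define hs where "hs = (inner l x0 - Jstar l - s0) / t0"
  have jsc: "isCont Jstar l" using Jstar_continuous continuous_on_eq_continuous_at[OF open_UNIV] by blast
  have Hlim: "(\<lambda>n. Hr (P n)) \<longlonglongrightarrow> hs"
  proof -
    have f: "(\<lambda>n. fst (W n)) \<longlonglongrightarrow> x0" using tendsto_fst[OF Wlim] by simp
    have sn: "(\<lambda>n. snd (W n)) \<longlonglongrightarrow> t0" using tendsto_snd[OF Wlim] by simp
    have j: "(\<lambda>n. Jstar (P n)) \<longlonglongrightarrow> Jstar l" by (rule isCont_tendsto_compose[OF jsc Plim])
    have "(\<lambda>n. (inner (P n) (fst (W n)) - Jstar (P n) - rfun (hlS J H) (W n)) / snd (W n)) \<longlonglongrightarrow> hs"
      unfolding hs_def using t0_pos by (intro tendsto_intros Plim f j Slim sn) auto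
    then show ?thesis using Hform by simp
  qed
  have Hl: "H l \<le> ereal hs"
    using elsc_le_limit[OF _ Plim _ Hlim] GH H_eq_Hr[OF PC] by (simp add: Gamma0_def)
  then have lC: "l \<in> domH" unfolding domH_def edom_def by (auto simp: le_less_trans)
  have Hrl: "Hr l \<le> hs" using Hl H_eq_Hr[OF lC] by simp
  have Sz0: "hlS J H (x0, t0) = ereal s0" using hlS_eq_rfun_ball_r0[OF center_in_ball_r0] unfolding s0_def .
  have s0eq: "s0 = inner l x0 - Jstar l - t0 * hs" unfolding hs_def using t0_pos by (simp add: field_simps)
  have "is_maximizer (x0, t0) l" unfolding is_maximizer_def
  proof (intro conjI ballI lC)
    fix q' assume q': "q' \<in> domH"
    have "ereal (dual_affine q' (x0, t0)) \<le> ereal s0" using dual_affine_le_hlS[OF q', of "(x0, t0)"] Sz0 by simp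
    moreover have "s0 \<le> dual_affine l (x0, t0)" unfolding dual_affine_def s0eq using Hrl t0_pos
      by (simp add: mult_left_mono)
    ultimately show "dual_affine q' (x0, t0) \<le> dual_affine l (x0, t0)" by simp
  qed
  then have lpb: "l = pbar" by (rule is_maximizer_pbar)
  have "hlS J H (x0, t0) = ereal (dual_affine pbar (x0, t0))" using hlS_is_maximizer[OF _ pbar_is_maximizer] t0_pos by simp
  then have "s0 = dual_affine pbar (x0, t0)" using Sz0 by simp
  then have hspb: "hs = Hr pbar" using s0eq lpb t0_pos unfolding dual_affine_def by simp
  show "l = pbar" by (rule lpb)
  show "(\<lambda>n. Hr (P n)) \<longlonglongrightarrow> Hr pbar" using Hlim hspb by simp
qed

lemma is_maximizer_continuous:
  assumes e: "e > 0"
  shows "\<exists>d>0. \<forall>y q. y \<in> ball (x0, t0) d \<longrightarrow> is_maximizer y q \<longrightarrow> norm (q - pbar) < e \<and> \<bar>Hr q - Hr pbar\<bar> < e"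
proof (rule ccontr)
  assume "\<not> ?thesis"
  then have neg: "\<forall>d>0. \<exists>y q. y \<in> ball (x0, t0) d \<and> is_maximizer y q \<and> \<not> (norm (q - pbar) < e \<and> \<bar>Hr q - Hr pbar\<bar> < e)"
    by blast
  have "\<forall>n. \<exists>yq. fst yq \<in> ball (x0, t0) (min r0 (1 / real (Suc n))) \<and> is_maximizer (fst yq) (snd yq) \<and>
      \<not> (norm (snd yq - pbar) < e \<and> \<bar>Hr (snd yq) - Hr pbar\<bar> < e)"
  proof
    fix n
    have "min r0 (1 / real (Suc n)) > 0" using r0_pos by simp
    from neg[rule_format, OF this] show "\<exists>yq. fst yq \<in> ball (x0, t0) (min r0 (1 / real (Suc n))) \<and> is_maximizer (fst yq) (snd yq) \<and>
      \<not> (norm (snd yq - pbar) < e \<and> \<bar>Hr (snd yq) - Hr pbar\<bar> < e)" by force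
  qed
  then obtain YQ where YQ: "\<And>n. fst (YQ n) \<in> ball (x0, t0) (min r0 (1 / real (Suc n)))"
    "\<And>n. is_maximizer (fst (YQ n)) (snd (YQ n))"
    "\<And>n. \<not> (norm (snd (YQ n) - pbar) < e \<and> \<bar>Hr (snd (YQ n)) - Hr pbar\<bar> < e)"
    by (metis choice)
  define Z where "Z n = fst (YQ n)" for n
  define Q where "Q n = snd (YQ n)" for n
  have Zb: "Z n \<in> ball (x0, t0) r0" for n using YQ(1)[of n] unfolding Z_def by auto
  have Zm: "is_maximizer (Z n) (Q n)" for n using YQ(2) unfolding Z_def Q_def by simp
  have Zn: "\<not> (norm (Q n - pbar) < e \<and> \<bar>Hr (Q n) - Hr pbar\<bar> < e)" for n using YQ(3) unfolding Q_def by simp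
  have "(\<lambda>n. Z n - (x0, t0)) \<longlonglongrightarrow> 0"
  proof (rule LIMSEQ_norm_0)
    fix n show "norm (Z n - (x0, t0)) < 1 / real (Suc n)"
      using YQ(1)[of n] unfolding Z_def by (simp add: dist_norm norm_minus_commute)
  qed
  then have Zlim: "Z \<longlonglongrightarrow> (x0, t0)" using tendsto_add[OF _ tendsto_const[of "(x0, t0)"]] by fastforce
  have Qb: "Q n \<in> cball 0 RB" for n using is_maximizer_norm_bound[OF Zb Zm] by (simp add: dist_norm)
  obtain l r where lr: "l \<in> cball 0 RB" "strict_mono r" "(Q \<circ> r) \<longlonglongrightarrow> l"
    using seq_compactE[OF compact_imp_seq_compact[OF compact_cball] ] Qb by metis
  have Zr: "(Z \<circ> r) \<longlonglongrightarrow> (x0, t0)" by (rule LIMSEQ_subseq_LIMSEQ[OF Zlim lr(2)])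
  have "l = pbar" "(\<lambda>n. Hr ((Q \<circ> r) n)) \<longlonglongrightarrow> Hr pbar"
    using is_maximizer_limit[of "Z \<circ> r" "Q \<circ> r" l] Zb Zm Zr lr(3) by auto
  then have "\<forall>\<^sub>F n in sequentially. dist ((Q \<circ> r) n) pbar < e \<and> dist (Hr ((Q \<circ> r) n)) (Hr pbar) < e"
    using lr(3) e by (simp add: tendsto_iff eventually_conj)
  then have "\<forall>\<^sub>F n in sequentially. False"
    by (rule eventually_mono) (use Zn in \<open>auto simp: dist_norm\<close>)
  then show False by simp
qed

text \<open>Comparing the affine pieces of the maximizers at \<open>y\<close> and at \<open>(x\<^sub>0, t\<^sub>0)\<close> sandwiches the
  first-order remainder of \<open>S\<close>.\<close>

lemma hlS_remainder_bound:
  assumes yb: "y \<in> ball (x0, t0) r0" and q: "is_maximizer y q"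
  shows "\<bar>real_of_ereal (hlS J H y) - real_of_ereal (hlS J H (x0, t0)) - inner (pbar, - Hr pbar) (y - (x0, t0))\<bar>
    \<le> (norm (q - pbar) + \<bar>Hr q - Hr pbar\<bar>) * norm (y - (x0, t0))"
proof -
  have Fy: "real_of_ereal (hlS J H y) = dual_affine q y"
    using hlS_is_maximizer[OF ball_r0_snd_pos[OF yb] q] by simp
  have Fz: "real_of_ereal (hlS J H (x0, t0)) = dual_affine pbar (x0, t0)"
    using hlS_is_maximizer[OF _ pbar_is_maximizer] t0_pos by simp
  have pbC: "pbar \<in> domH" and qC: "q \<in> domH" using pbar_is_maximizer q unfolding is_maximizer_def by auto
  have l1: "dual_affine pbar y \<le> dual_affine q y" using q pbC unfolding is_maximizer_def by blast
  have l2: "dual_affine q (x0, t0) \<le> dual_affine pbar (x0, t0)" using pbar_is_maximizer qC unfolding is_maximizer_def by blast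
  define R where "R = dual_affine q y - dual_affine pbar (x0, t0) - inner (pbar, - Hr pbar) (y - (x0, t0))"
  have "R \<ge> 0" unfolding R_def using l1 dual_affine_diff[of pbar y "(x0, t0)"] by linarith
  moreover have "inner (q - pbar, - (Hr q - Hr pbar)) (y - (x0, t0)) =
      inner (q, - Hr q) (y - (x0, t0)) - inner (pbar, - Hr pbar) (y - (x0, t0))"
    by (simp add: inner_diff_left[symmetric])
  then have "R \<le> inner (q - pbar, - (Hr q - Hr pbar)) (y - (x0, t0))"
    unfolding R_def using l2 dual_affine_diff[of q y "(x0, t0)"] by linarith
  moreover have "\<bar>inner (q - pbar, - (Hr q - Hr pbar)) (y - (x0, t0))\<bar>
      \<le> (norm (q - pbar) + \<bar>Hr q - Hr pbar\<bar>) * norm (y - (x0, t0))"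
    using inner_pair_bound[of "q - pbar" "- (Hr q - Hr pbar)" "y - (x0, t0)"] by (simp add: abs_minus_commute)
  ultimately show ?thesis unfolding Fy Fz R_def[symmetric] by linarith
qed

lemma has_grad_hlS: "has_grad (hlS J H) (x0, t0) (pbar, - Hr pbar)"
  unfolding has_grad_def
proof (intro conjI)
  have "\<forall>\<^sub>F y in nhds (x0, t0). y \<in> ball (x0, t0) r0"
    using r0_pos by (intro eventually_nhds_in_open) auto
  then show "\<forall>\<^sub>F y in nhds (x0, t0). \<bar>hlS J H y\<bar> \<noteq> \<infinity>"
    by (rule eventually_mono) (simp add: hlS_eq_rfun_ball_r0)
  show "((\<lambda>y. real_of_ereal (hlS J H y)) has_derivative (\<lambda>h. inner (pbar, - Hr pbar) h)) (at (x0, t0))"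
    unfolding has_derivative_at_alt
  proof (intro conjI allI impI)
    show "bounded_linear (\<lambda>h. inner (pbar, - Hr pbar) h)" by (rule bounded_linear_inner_right)
    fix e :: real assume e: "e > 0"
    then obtain d where d: "d > 0"
      "\<And>y q. y \<in> ball (x0, t0) d \<Longrightarrow> is_maximizer y q \<Longrightarrow> norm (q - pbar) < e/2 \<and> \<bar>Hr q - Hr pbar\<bar> < e/2"
      using is_maximizer_continuous[of "e/2"] by auto
    show "\<exists>d>0. \<forall>y. norm (y - (x0, t0)) < d \<longrightarrow>
       norm (real_of_ereal (hlS J H y) - real_of_ereal (hlS J H (x0, t0)) - inner (pbar, - Hr pbar) (y - (x0, t0)))
       \<le> e * norm (y - (x0, t0))"
    proof (intro exI[of _ "min d r0"] conjI allI impI)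
      show "min d r0 > 0" using d r0_pos by simp
      fix y assume y: "norm (y - (x0, t0)) < min d r0"
      then have yb: "y \<in> ball (x0, t0) r0" and yd: "y \<in> ball (x0, t0) d"
        by (auto simp: dist_norm norm_minus_commute)
      obtain q where q: "is_maximizer y q" using is_maximizer_exists[OF yb] by blast
      have "(norm (q - pbar) + \<bar>Hr q - Hr pbar\<bar>) * norm (y - (x0, t0)) \<le> e * norm (y - (x0, t0))"
        using d(2)[OF yd q] by (intro mult_right_mono) auto
      with hlS_remainder_bound[OF yb q] show "norm (real_of_ereal (hlS J H y) - real_of_ereal (hlS J H (x0, t0))
          - inner (pbar, - Hr pbar) (y - (x0, t0))) \<le> e * norm (y - (x0, t0))" by simp
    qed
  qed
qed
end

context hopf_lax
begin

lemma interior_point_gradient: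
  assumes xt: "(x, t) \<in> interior (edom (hlS J H))"
  shows "\<exists>p. t > 0 \<and> is_maximizer (x, t) p \<and> (\<forall>q. is_maximizer (x, t) q \<longrightarrow> q = p) \<and> p \<in> domH \<and>
    has_grad (hlS J H) (x, t) (p, - Hr p)"
proof -
  obtain dl Mb where lb: "dl > 0" "\<And>y. y \<in> cball (x, t) dl \<Longrightarrow> hlS J H y \<le> ereal Mb"
    "isCont (rfun (hlS J H)) (x, t)"
    using econvex_local_bound[OF econvex_hlS hlS_not_minf xt] by metis
  have hl: "hopf_lax J H" by (rule hopf_lax.intro) (use GJ GH CJ LH in auto)
  interpret I: hopf_lax_interior_point J H x t dl Mb
    by (rule hopf_lax_interior_point.intro[OF hl hopf_lax_interior_point_axioms.intro]) (use xt lb in auto)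
  show ?thesis
    using I.t0_pos I.pbar_is_maximizer I.is_maximizer_pbar I.has_grad_hlS unfolding is_maximizer_def by blast
qed

end

context hopf_lax
begin

lemma objective_unique_max_has_grad:
  assumes xt: "(x, t) \<in> interior (edom (hlS J H))"
  shows "(\<exists>!p. \<forall>q. ereal (inner q x) - ereal t * H q - fconj J q
                 \<le> ereal (inner p x) - ereal t * H p - fconj J p) \<and>
       (\<forall>p. (\<forall>q. ereal (inner q x) - ereal t * H q - fconj J q
                 \<le> ereal (inner p x) - ereal t * H p - fconj J p) \<longrightarrow>
            (\<exists>h. H p = ereal h \<and> has_grad (hlS J H) (x, t) (p, - h)))"
proof -
  obtain p where p: "t > 0" "is_maximizer (x, t) p" "\<forall>q. is_maximizer (x, t) q \<longrightarrow> q = p" "p \<in> domH"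
      "has_grad (hlS J H) (x, t) (p, - Hr p)"
    using interior_point_gradient[OF xt] by blast
  show ?thesis unfolding objective_max_iff[OF p(1)] using p H_eq_Hr by blast
qed

lemma hamilton_jacobi:
  assumes xt: "(x, t) \<in> interior (edom (hlS J H))" and g: "has_grad (hlS J H) (x, t) (g, s)"
  shows "ereal s + H g = 0"
proof -
  obtain p where p: "p \<in> domH" "has_grad (hlS J H) (x, t) (p, - Hr p)"
    using interior_point_gradient[OF xt] by blast
  have "(\<lambda>h. inner (g, s) h) = (\<lambda>h. inner (p, - Hr p) h)"
    using g p(2) unfolding has_grad_def by (metis has_derivative_unique)
  then have "(g, s) = (p, - Hr p)" by (metis vector_eq_rdot)
  then show ?thesis using H_eq_Hr[OF p(1)] by simp
qed

lemma S0_subdiff_closure_domH: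
  assumes "subdiff J x \<inter> closure (edom H) \<noteq> {}"
  shows "S0 x = J x \<and> subdiff S0 x = subdiff J x \<inter> closure (edom H)"
  using assms S0_eq_J S0_subdiff unfolding domH_def by blast

end

theorem proposition5p1:
  fixes J H :: "'a::euclidean_space \<Rightarrow> ereal" and S :: "'a \<times> real \<Rightarrow> ereal"
  assumes A1: "Gamma0 J" "Gamma0 H" "coercive1 J" "legendre H"
    and S_def: "S = hlS J H"
  shows
    \<comment> \<open>(a)\<close>
    "(econvex S \<and> elsc S \<and>
     (\<forall>p Em. fconj S (p, Em) =
        fconj J p + ind {(q, e). q \<in> edom H \<and> ereal e + H q \<le> 0} (p, Em))) \<and>
    \<comment> \<open>(b)\<close>
    (edom S = (\<Union>t\<in>{0<..}. {a + t *\<^sub>R b | a b. a \<in> edom J \<and> b \<in> edom (fconj H)} \<times> {t})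
              \<union> ({a + b | a b. a \<in> edom J \<and> b \<in> edom (fconj (ind (edom H)))} \<times> {0})) \<and>
    (interior (edom S) =
       (\<Union>t\<in>{0<..}. {a + t *\<^sub>R b | a b. a \<in> edom J \<and> b \<in> interior (edom (fconj H))} \<times> {t})) \<and>
    \<comment> \<open>(c)\<close>
    (\<forall>x t. (x, t) \<in> interior (edom S) \<longrightarrow>
       (\<exists>!p. \<forall>q. ereal (inner q x) - ereal t * H q - fconj J q
                 \<le> ereal (inner p x) - ereal t * H p - fconj J p) \<and>
       (\<forall>p. (\<forall>q. ereal (inner q x) - ereal t * H q - fconj J q
                 \<le> ereal (inner p x) - ereal t * H p - fconj J p) \<longrightarrow>
            (\<exists>h. H p = ereal h \<and> has_grad S (x, t) (p, - h)))) \<and>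
    \<comment> \<open>(d)\<close>
    (\<forall>x t g s. (x, t) \<in> interior (edom S) \<longrightarrow> has_grad S (x, t) (g, s) \<longrightarrow>
       ereal s + H g = 0) \<and>
    (\<forall>JS. Gamma0 JS \<and> edom (fconj JS) = closure (edom H) \<and>
          (\<forall>p\<in>edom (fconj JS). fconj JS p = fconj J p) \<longrightarrow>
          (\<forall>x. S (x, 0) = JS x)) \<and>
    \<comment> \<open>(e)\<close>
    (\<forall>x. S (x, 0) \<le> J x) \<and>
    (\<forall>x\<in>edom J. subdiff J x \<inter> closure (edom H) \<noteq> {} \<longrightarrow>
       S (x, 0) = J x \<and> subdiff (\<lambda>y. S (y, 0)) x = subdiff J x \<inter> closure (edom H))"
proof -
  interpret hopf_lax J H by (rule hopf_lax.intro) (use A1 in auto)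
  have "hlS J H (x, 0) = S0 x" for x by (simp add: hlS_cases)
  then show ?thesis
    unfolding S_def
    using econvex_hlS elsc_hlS fconj_hlS[unfolded dual_constraint_def] edom_hlS interior_edom_hlS
      objective_unique_max_has_grad hamilton_jacobi S0_eq_JS S0_le_J S0_subdiff_closure_domH
    by simp
qed

end
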